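(* Suppose there are constants $C_1,C_2>0$ with $C_1q\le p(q)\le C_2q$ for all $q\in\mathbb N$, that $\mathbb E|\varepsilon|^\kappa<\infty$ for some $\kappa>3$, and that the sequence of nonnegative integers $(t_n)$ satisfies $t_nn^{-1/2}=\mathcal O(1)$. Then $$\sup_{z\in\mathcal B}\big|\hat g(z)-\mathbb E\hat g(z)\big|=\mathcal O\big(t_n^4\log(n)^{1/2}n^{-1/2}\big)\quad\text{almost surely}.$$
   Context: Let $\mathcal B=\{(r,\theta):0\le r\le 1,\ 0\le\theta\le 2\pi\}$ be the unit disc in polar coordinates, with probability measure $d\mu=\pi^{-1}r\,dr\,d\theta$, and $\mathcal D=\{(s,\phi):0\le s\le1,\ 0\le\phi\le2\pi\}$ with probability measure $d\lambda=2\pi^{-2}\sqrt{1-s^2}\,ds\,d\phi$. The normalized Radon transform is $\mathcal Rg(s,\phi)=\frac12(1-s^2)^{-1/2}\int_{-\sqrt{1-s^2}}^{\sqrt{1-s^2}}g(s\cos\phi-t\sin\phi,\ s\sin\phi+t\cos\phi)\,dt$. Let $\mathcal N=\{(l,m):m\in\mathbb N_0,\ l\in\{m,m-2,\dots,-m\}\}$; for $(l,m)\in\mathcal N$, $R_m^{|l|}(r)=\sum_{j=0}^{(m-|l|)/2}(-1)^j\frac{(m-j)!}{j!((m+|l|)/2-j)!((m-|l|)/2-j)!}r^{m-2j}$, $\varphi_{(l,m)}(r,\theta)=\sqrt{m+1}R_m^{|l|}(r)e^{il\theta}$, $\psi_{(l,m)}(s,\phi)=U_m(s)e^{il\phi}$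 with $U_m$ the Chebyshev polynomial of the second kind; $\varphi_{(l,m)}=\psi_{(l,m)}=0$ for $(l,m)\notin\mathcal N$. Design and model: for $p,q\in\mathbb N$ let $\mathbf K=\{(k_1,k_2):0\le k_1\le q-1,\ 0\le k_2\le p-1\}$, $n=pq$, cells $G_{\mathbf k}=\{(s,\phi)\in\mathcal D: k_1/q\le s\le (k_1+1)/q,\ 2\pi k_2/p\le\phi\le2\pi(k_2+1)/p\}$, weights $w_{\mathbf k}=\lambda(G_{\mathbf k})$, design points $z_{\mathbf k}=(z^1_{k_1},z^2_{k_2})$ with $z^2_{k_2}=2\pi(k_2+\tfrac12)/p$ and $z^1_{k_1}$ solving $\int_{k_1/q}^{(k_1+1)/q}(s-z^1_{k_1})\sqrt{1-s^2}\,ds=0$. Asymptotics are $q\to\infty$ with $p=p(q)$ (written $n\to\infty$). Observations: $Y_{\mathbf k}=\mathcal Rg(z_{\mathbf k})+\varepsilon_{\mathbf k}$, where $g$ is a function on $\mathcal B$ and, for each $n$, the $\varepsilon_{\mathbf k}$, $\mathbf k\in\mathbf K$, are i.i.d. copies of a random variable $\varepsilon$ with $\mathbb E\varepsilon=0$ (triangular array). Estimator: $\hat R(l,m)=\sum_{\mathbf k}w_{\mathbf k}\overline{\psi_{(l,m)}(z_{\mathbf k})}Y_{\mathbf k}$ and $\hat g(r,\theta)=\sum_{m=0}^{t_n}\sum_{l=-m}^m\sqrt{m+1}\,\varphi_{(l,m)}(r,\theta)\hat R(l,m)$. *)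

theory Defs
  imports "HOL-Probability.Probability" "HOL-Library.Landau_Symbols"
begin

definition inN :: "int \<Rightarrow> nat \<Rightarrow> bool" where
  "inN l m \<longleftrightarrow> nat \<bar>l\<bar> \<le> m \<and> even (m - nat \<bar>l\<bar>)"

definition zernR :: "nat \<Rightarrow> nat \<Rightarrow> real \<Rightarrow> real" where
  "zernR m a r = (\<Sum>j=0..(m - a) div 2.
      (-1)^j * (fact (m - j) :: real)
        / ((fact j :: real) * fact ((m + a) div 2 - j) * fact ((m - a) div 2 - j))
      * r ^ (m - 2 * j))"

fun chebU :: "nat \<Rightarrow> real \<Rightarrow> real" where
  "chebU 0 s = 1"
| "chebU (Suc 0) s = 2 * s"
| "chebU (Suc (Suc n)) s = 2 * s * chebU (Suc n) s - chebU n s"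

definition zphi :: "int \<Rightarrow> nat \<Rightarrow> real \<Rightarrow> real \<Rightarrow> complex" where
  "zphi l m r \<theta> = (if inN l m
     then complex_of_real (sqrt (real m + 1) * zernR m (nat \<bar>l\<bar>) r) * exp (\<i> * of_int l * complex_of_real \<theta>)
     else 0)"

definition cpsi :: "int \<Rightarrow> nat \<Rightarrow> real \<Rightarrow> real \<Rightarrow> complex" where
  "cpsi l m s \<phi> = (if inN l m
     then complex_of_real (chebU m s) * exp (\<i> * of_int l * complex_of_real \<phi>)
     else 0)"

text \<open>Normalized Radon transform of g (g given in Cartesian coordinates).\<close>
definition radon :: "(real \<times> real \<Rightarrow> real) \<Rightarrow> real \<Rightarrow> real \<Rightarrow> real" where
  "radon g s \<phi> = 1/2 * (1 - s^2) powr (-1/2) *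
     (LBINT t = - sqrt (1 - s^2)..sqrt (1 - s^2).
        g (s * cos \<phi> - t * sin \<phi>, s * sin \<phi> + t * cos \<phi>))"

text \<open>Design (P = p, Q = q).\<close>
definition Kset :: "nat \<Rightarrow> nat \<Rightarrow> (nat \<times> nat) set" where
  "Kset P Q = {0..<Q} \<times> {0..<P}"

text \<open>w_k = lambda(G_k), with d lambda = 2 pi^-2 sqrt(1-s^2) ds dphi (depends only on k1).\<close>
definition cellw :: "nat \<Rightarrow> nat \<Rightarrow> nat \<Rightarrow> real" where
  "cellw P Q k1 = 2 / pi^2 * (LBINT s = real k1 / real Q..real (k1 + 1) / real Q. sqrt (1 - s^2))
                  * (2 * pi / real P)"

definition z1 :: "nat \<Rightarrow> nat \<Rightarrow> real" where
  "z1 Q k1 = (THE z. (LBINT s = real k1 / real Q..real (k1 + 1) / real Q. (s - z) * sqrt (1 - s^2)) = 0)"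

definition z2 :: "nat \<Rightarrow> nat \<Rightarrow> real" where
  "z2 P k2 = 2 * pi * (real k2 + 1/2) / real P"

text \<open>Estimated coefficients, given realized errors e_k; Y_k = Rg(z_k) + e_k.\<close>
definition Rhat :: "(real \<times> real \<Rightarrow> real) \<Rightarrow> nat \<Rightarrow> nat \<Rightarrow> (nat \<times> nat \<Rightarrow> real) \<Rightarrow> int \<Rightarrow> nat \<Rightarrow> complex" where
  "Rhat g P Q e l m = (\<Sum>k\<in>Kset P Q.
      complex_of_real (cellw P Q (fst k)) * cnj (cpsi l m (z1 Q (fst k)) (z2 P (snd k)))
      * complex_of_real (radon g (z1 Q (fst k)) (z2 P (snd k)) + e k))"

definition ghat :: "(real \<times> real \<Rightarrow> real) \<Rightarrow> nat \<Rightarrow> nat \<Rightarrow> nat \<Rightarrow> (nat \<times> nat \<Rightarrow> real) \<Rightarrow> real \<Rightarrow> real \<Rightarrow> complex" where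
  "ghat g P Q T e r \<theta> = (\<Sum>m=0..T. \<Sum>l\<in>{- int m..int m}.
      complex_of_real (sqrt (real m + 1)) * zphi l m r \<theta> * Rhat g P Q e l m)"

end

theory Submission
  imports Defs "HOL-Real_Asymp.Real_Asymp"
begin

(* The deviation ghat - E ghat is the image of the noise coefficients
   X_lm = sum_k w_k conj (psi_lm (z_k)) eps_k under z |-> sum_{m <= T} sum_l sqrt (m + 1) phi_lm (z) X_lm.
   Both bases are uniformly bounded: U_m (cos phi) = sum_{k <= m} cos ((m - 2k) phi) gives |U_m| <= m + 1,
   and R_m^a (cos theta) is a diagonal coefficient of the rotation by theta acting on binary forms of
   degree m, which preserves the Bombieri norm, so |R_m^a| <= 1. Hence the weights are O((m + 1) / n)
   and |ghat - E ghat| <= 24 T^4 max_lm |X_lm| / (m + 1) uniformly in z.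
   Each X_lm is a weighted sum of n i.i.d. centred errors with a finite moment of order kappa > 3.
   Truncating them at n^((kappa + 3) / (4 kappa)) and applying a Bernstein-type Chernoff bound gives
   |X_lm| <= C (m + 1) sqrt (log n / n) for all l and m <= T outside an event of probability
   O(n^(-(kappa - 1) / 4) + T^2 n^(-4)). Since n >= C1 q^2, these probabilities are summable in q,
   and the Borel-Cantelli lemma concludes. *)

section \<open>Uniform bounds for the Zernike and Chebyshev bases\<close>

definition rot_coeff :: "nat \<Rightarrow> nat \<Rightarrow> nat \<Rightarrow> real \<Rightarrow> real" where
  "rot_coeff A B c \<theta> = (\<Sum>i\<le>A. \<Sum>s\<le>B. of_bool (A - i + s = c) *
     (real (A choose i) * real (B choose s) * (- sin \<theta>)^i * cos \<theta>^(A - i) * sin \<theta>^s * cos \<theta>^(B - s)))"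

lemma rot_coeff_eq_0: "A + B < c \<Longrightarrow> rot_coeff A B c \<theta> = 0"
  unfolding rot_coeff_def by (intro sum.neutral ballI) auto

lemma rot_poly_expand:
  "(cos \<theta> * x - sin \<theta>)^A * (sin \<theta> * x + cos \<theta>)^B = (\<Sum>c\<le>A+B. rot_coeff A B c \<theta> * x^c)"
proof -
  define t where "t i s = real (A choose i) * real (B choose s) * (- sin \<theta>)^i * cos \<theta>^(A - i)
    * sin \<theta>^s * cos \<theta>^(B - s)" for i s
  have "(cos \<theta> * x - sin \<theta>)^A * (sin \<theta> * x + cos \<theta>)^B
      = (\<Sum>i\<le>A. real (A choose i) * (- sin \<theta>)^i * (cos \<theta> * x)^(A - i))
        * (\<Sum>s\<le>B. real (B choose s) * (sin \<theta> * x)^s * cos \<theta>^(B - s))"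
    using binomial_ring[of "- sin \<theta>" "cos \<theta> * x" A] binomial_ring[of "sin \<theta> * x" "cos \<theta>" B]
    by simp
  also have "\<dots> = (\<Sum>i\<le>A. \<Sum>s\<le>B. t i s * x^(A - i + s))"
    unfolding sum_product t_def
    by (intro sum.cong refl) (simp only: power_add power_mult_distrib ac_simps)
  also have "\<dots> = (\<Sum>i\<le>A. \<Sum>s\<le>B. \<Sum>c\<le>A+B. if A - i + s = c then t i s * x^c else 0)"
    by (intro sum.cong refl) (auto simp: sum.delta)
  also have "\<dots> = (\<Sum>c\<le>A+B. \<Sum>i\<le>A. \<Sum>s\<le>B. if A - i + s = c then t i s * x^c else 0)"
    by (subst sum.swap, subst (2) sum.swap) (rule refl)
  also have "\<dots> = (\<Sum>c\<le>A+B. rot_coeff A B c \<theta> * x^c)"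
    unfolding rot_coeff_def t_def sum_distrib_right by (intro sum.cong refl) auto
  finally show ?thesis .
qed

lemma rot_coeff_has_deriv: "(rot_coeff A B c has_real_derivative deriv (rot_coeff A B c) \<theta>) (at \<theta>)"
proof -
  have "\<exists>D. (rot_coeff A B c has_real_derivative D) (at \<theta>)"
    unfolding rot_coeff_def[abs_def] by (rule exI, (rule derivative_eq_intros refl)+)
  then show ?thesis using DERIV_imp_deriv by metis
qed

text \<open>The infinitesimal rotation acts on binary forms of degree \<open>n\<close>, dehomogenised at \<open>y = 1\<close>,
  as \<open>x (n - x \<partial>\<^sub>x) - \<partial>\<^sub>x\<close>.\<close>
lemma rot_poly_deriv_identity:
  fixes A B :: nat and \<theta> x :: real
  defines "n \<equiv> A + B"
  shows "(\<Sum>c\<le>n. deriv (rot_coeff A B c) \<theta> * x^c)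
    = x * (real n * (\<Sum>c\<le>n. rot_coeff A B c \<theta> * x^c)
           - x * (\<Sum>c\<le>n. rot_coeff A B c \<theta> * (real c * x^(c - 1))))
      - (\<Sum>c\<le>n. rot_coeff A B c \<theta> * (real c * x^(c - 1)))"
proof -
  define X where "X x = cos \<theta> * x - sin \<theta>" for x
  define Y where "Y x = sin \<theta> * x + cos \<theta>" for x
  define F\<^sub>x where "F\<^sub>x x = real A * X x ^ (A - 1) * cos \<theta> * Y x ^ B
      + X x ^ A * (real B * Y x ^ (B - 1) * sin \<theta>)" for x
  have expand: "(\<lambda>t. (cos t * x - sin t)^A * (sin t * x + cos t)^B)
      = (\<lambda>t. \<Sum>c\<le>n. rot_coeff A B c t * x^c)" for x
    unfolding n_def by (intro ext rot_poly_expand)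
  have "((\<lambda>t. (cos t * x - sin t)^A * (sin t * x + cos t)^B) has_real_derivative
      real A * X x ^ (A - 1) * (- Y x) * Y x ^ B + X x ^ A * (real B * Y x ^ (B - 1) * X x)) (at \<theta>)"
    unfolding X_def Y_def by (auto intro!: derivative_eq_intros simp: algebra_simps)
  moreover have "((\<lambda>t. \<Sum>c\<le>n. rot_coeff A B c t * x^c) has_real_derivative
      (\<Sum>c\<le>n. deriv (rot_coeff A B c) \<theta> * x^c)) (at \<theta>)"
    by (intro DERIV_sum DERIV_cmult_right rot_coeff_has_deriv)
  ultimately have d\<theta>: "(\<Sum>c\<le>n. deriv (rot_coeff A B c) \<theta> * x^c)
      = real A * X x ^ (A - 1) * (- Y x) * Y x ^ B + X x ^ A * (real B * Y x ^ (B - 1) * X x)"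
    unfolding expand using DERIV_unique by blast
  have "((\<lambda>x. X x ^ A * Y x ^ B) has_real_derivative F\<^sub>x x) (at x)"
    unfolding F\<^sub>x_def X_def Y_def by (auto intro!: derivative_eq_intros simp: algebra_simps)
  moreover have "((\<lambda>x. \<Sum>c\<le>n. rot_coeff A B c \<theta> * x^c) has_real_derivative
      (\<Sum>c\<le>n. rot_coeff A B c \<theta> * (real c * x^(c - 1)))) (at x)"
    by (intro DERIV_sum DERIV_cmult) (auto intro!: derivative_eq_intros)
  moreover have expand_x: "(\<lambda>x. X x ^ A * Y x ^ B) = (\<lambda>x. \<Sum>c\<le>n. rot_coeff A B c \<theta> * x^c)"
    unfolding X_def Y_def n_def by (intro ext rot_poly_expand)
  ultimately have dx: "(\<Sum>c\<le>n. rot_coeff A B c \<theta> * (real c * x^(c - 1))) = F\<^sub>x x"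
    using DERIV_unique by metis
  have generator: "x * (N * (XA * YB) - x * (a * P * cos \<theta> * YB + XA * (b * Q * sin \<theta>)))
      - (a * P * cos \<theta> * YB + XA * (b * Q * sin \<theta>)) = a * P * (- y) * YB + XA * (b * Q * z)"
    if "N = a + b" "a * XA = a * z * P" "b * YB = b * y * Q"
      "z = cos \<theta> * x - sin \<theta>" "y = sin \<theta> * x + cos \<theta>"
    for N a b XA YB P Q y z :: real
    using that by algebra
  have "real A * X x ^ A = real A * X x * X x ^ (A - 1)"
    by (cases A) auto
  moreover have "real B * Y x ^ B = real B * Y x * Y x ^ (B - 1)"
    by (cases B) auto
  ultimately show ?thesis
    unfolding d\<theta> dx expand_x[THEN fun_cong, symmetric] F\<^sub>x_def
    by (intro generator[symmetric]) (simp_all add: X_def Y_def n_def)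
qed

lemma coeffs_of_generator_identity:
  fixes f d :: "nat \<Rightarrow> real"
  assumes identity: "\<And>x. (\<Sum>c\<le>n. d c * x^c)
      = x * (real n * (\<Sum>c\<le>n. f c * x^c) - x * (\<Sum>c\<le>n. f c * (real c * x^(c - 1))))
        - (\<Sum>c\<le>n. f c * (real c * x^(c - 1)))"
    and f_above: "f (Suc n) = 0" and "c \<le> n"
  shows "d c = (if c = 0 then 0 else real (n + 1 - c) * f (c - 1)) - real (c + 1) * f (c + 1)"
proof -
  define g where "g c = (if c = 0 then 0 else real (n + 1 - c) * f (c - 1)) - real (c + 1) * f (c + 1)"
    for c
  have "(\<Sum>c\<le>n. g c * x^c) = (\<Sum>c\<le>n. d c * x^c)" for x
  proof -
    have up: "(\<Sum>c\<le>n. (if c = 0 then 0 else real (n + 1 - c) * f (c - 1)) * x^c)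
        = (\<Sum>c\<le>n. real (n - c) * f c * x^Suc c)"
    proof -
      have "(\<Sum>c\<le>n. (if c = 0 then 0 else real (n + 1 - c) * f (c - 1)) * x^c)
          = (\<Sum>c\<le>Suc n. (if c = 0 then 0 else real (n + 1 - c) * f (c - 1)) * x^c)"
        by simp
      also have "\<dots> = (\<Sum>c\<le>n. real (n - c) * f c * x^Suc c)"
        unfolding sum.atMost_Suc_shift by simp
      finally show ?thesis .
    qed
    have down: "(\<Sum>c\<le>n. real (c + 1) * f (c + 1) * x^c) = (\<Sum>c\<le>n. f c * (real c * x^(c - 1)))"
    proof -
      have "(\<Sum>c\<le>n. real (c + 1) * f (c + 1) * x^c) = (\<Sum>c\<le>Suc n. f c * (real c * x^(c - 1)))"
        by (subst sum.atMost_Suc_shift) (simp add: algebra_simps)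
      then show ?thesis using f_above by simp
    qed
    have "x * (x * x^(c - 1)) = x^Suc c" if "0 < c" for c
      using that by (cases c) auto
    then have "(\<Sum>c\<le>n. real (n - c) * f c * x^Suc c)
        = x * (real n * (\<Sum>c\<le>n. f c * x^c) - x * (\<Sum>c\<le>n. f c * (real c * x^(c - 1))))"
      unfolding sum_distrib_left sum_subtractf[symmetric]
      by (intro sum.cong refl) (auto simp: of_nat_diff algebra_simps)
    then show ?thesis
      unfolding identity g_def sum_subtractf left_diff_distrib up down by simp
  qed
  then have "(\<Sum>c\<le>n. (d c - g c) * x^c) = 0" for x
    by (simp add: left_diff_distrib sum_subtractf)
  then show ?thesis
    using polyfun_eq_0[of "\<lambda>c. d c - g c" n] \<open>c \<le> n\<close> unfolding g_def by auto
qed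

lemma rot_coeff_deriv:
  assumes "c \<le> A + B"
  shows "deriv (rot_coeff A B c) \<theta> = (if c = 0 then 0 else real (A + B + 1 - c) * rot_coeff A B (c - 1) \<theta>)
    - real (c + 1) * rot_coeff A B (c + 1) \<theta>"
  by (rule coeffs_of_generator_identity[OF rot_poly_deriv_identity rot_coeff_eq_0 assms]) simp

lemma rot_coeff_at_0: "rot_coeff A B c 0 = of_bool (c = A)"
proof -
  have "rot_coeff A B c 0 = (\<Sum>i\<le>A. \<Sum>s\<le>B. if s = 0 then (if i = 0 then of_bool (c = A) else 0) else 0)"
    unfolding rot_coeff_def by (intro sum.cong refl) (auto simp: power_0_left)
  also have "\<dots> = of_bool (c = A)"
    by (simp add: sum.delta')
  finally show ?thesis .
qed

lemma rot_coeff_energy_deriv: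
  fixes A B :: nat and \<theta> :: real
  defines "n \<equiv> A + B"
  shows "(\<Sum>c\<le>n. rot_coeff A B c \<theta> * deriv (rot_coeff A B c) \<theta> * (fact c * fact (n - c))) = 0"
proof -
  define f where "f c = rot_coeff A B c \<theta>" for c
  define W :: "nat \<Rightarrow> real" where "W c = fact c * fact (n - c)" for c
  have ode: "deriv (rot_coeff A B c) \<theta>
      = (if c = 0 then 0 else real (n + 1 - c) * f (c - 1)) - real (c + 1) * f (c + 1)" if "c \<le> n" for c
    using rot_coeff_deriv[of c A B \<theta>] that unfolding f_def n_def by simp
  have "(\<Sum>c\<le>n. f c * deriv (rot_coeff A B c) \<theta> * W c)
      = (\<Sum>c\<le>n. f c * W c * (if c = 0 then 0 else real (n + 1 - c) * f (c - 1)))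
        - (\<Sum>c\<le>n. f c * W c * (real (c + 1) * f (c + 1)))"
    unfolding sum_subtractf[symmetric] by (intro sum.cong refl) (simp add: ode algebra_simps)
  also have "\<dots> = 0"
  proof (cases n)
    case 0
    then show ?thesis using rot_coeff_eq_0[of A B 1] unfolding f_def n_def by simp
  next
    case (Suc m)
    have "(\<Sum>c\<le>n. f c * W c * (if c = 0 then 0 else real (n + 1 - c) * f (c - 1)))
        = (\<Sum>c\<le>m. f (Suc c) * W (Suc c) * (real (n - c) * f c))"
      unfolding Suc by (subst sum.atMost_Suc_shift) simp
    also have "\<dots> = (\<Sum>c\<le>m. f c * W c * (real (c + 1) * f (c + 1)))"
    proof (rule sum.cong[OF refl])
      fix c assume "c \<in> {..m}"
      then have "n - c = Suc (m - c)" "n - Suc c = m - c" using Suc by auto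
      then have w: "W (Suc c) * real (n - c) = W c * real (c + 1)"
        unfolding W_def by (simp add: algebra_simps)
      have "f (Suc c) * W (Suc c) * (real (n - c) * f c) = f (Suc c) * f c * (W (Suc c) * real (n - c))"
        by (simp only: ac_simps)
      also have "\<dots> = f c * W c * (real (c + 1) * f (c + 1))"
        unfolding w by (simp add: ac_simps)
      finally show "f (Suc c) * W (Suc c) * (real (n - c) * f c) = f c * W c * (real (c + 1) * f (c + 1))" .
    qed
    also have "\<dots> = (\<Sum>c\<le>n. f c * W c * (real (c + 1) * f (c + 1)))"
      using rot_coeff_eq_0[of A B "Suc (Suc m)"] Suc unfolding f_def n_def by simp
    finally show ?thesis by simp
  qed
  finally show ?thesis unfolding f_def W_def .
qed

text \<open>Rotation invariance of the Bombieri norm, in which \<open>x\<^sup>c\<close> has weight \<open>c! (n - c)!\<close>.\<close>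
lemma rot_coeff_energy:
  "(\<Sum>c\<le>A+B. (rot_coeff A B c \<theta>)^2 * (fact c * fact (A + B - c))) = fact A * fact B"
proof -
  define N where "N t = (\<Sum>c\<le>A+B. (rot_coeff A B c t)^2 * (fact c * fact (A + B - c) :: real))" for t
  have "(N has_real_derivative 0) (at t)" for t
  proof -
    have "(N has_real_derivative
        (\<Sum>c\<le>A+B. 2 * rot_coeff A B c t * deriv (rot_coeff A B c) t * (fact c * fact (A + B - c)))) (at t)"
      unfolding N_def
      by (intro DERIV_sum DERIV_cmult_right) (auto intro!: derivative_eq_intros rot_coeff_has_deriv)
    also have "(\<Sum>c\<le>A+B. 2 * rot_coeff A B c t * deriv (rot_coeff A B c) t * (fact c * fact (A + B - c)))
        = 2 * (\<Sum>c\<le>A+B. rot_coeff A B c t * deriv (rot_coeff A B c) t * (fact c * fact (A + B - c)))"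
      by (simp add: sum_distrib_left algebra_simps)
    finally show ?thesis
      using rot_coeff_energy_deriv[of A B t] by simp
  qed
  then have "N \<theta> = N 0"
    using DERIV_isconst_all by blast
  also have "N 0 = fact A * fact B"
  proof -
    have diag: "(of_bool (c = A))^2 * (fact c * fact (A + B - c)) = (if c = A then fact A * fact B else 0)"
      for c :: nat
      by auto
    show ?thesis unfolding N_def rot_coeff_at_0 diag by (simp add: sum.delta)
  qed
  finally show ?thesis unfolding N_def .
qed

lemma rot_coeff_diag_sq_le_1: "(rot_coeff A B A \<theta>)^2 \<le> 1"
proof -
  have "(rot_coeff A B A \<theta>)^2 * (fact A * fact (A + B - A))
      \<le> (\<Sum>c\<le>A+B. (rot_coeff A B c \<theta>)^2 * (fact c * fact (A + B - c)))"
    by (rule member_le_sum) auto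
  then have "(rot_coeff A B A \<theta>)^2 * (fact A * fact B) \<le> 1 * (fact A * fact B)"
    unfolding rot_coeff_energy by simp
  then show ?thesis
    by (meson mult_le_cancel_right_pos fact_gt_zero mult_pos_pos)
qed

lemma rot_coeff_diag:
  assumes "B \<le> A"
  shows "rot_coeff A B A \<theta>
    = (\<Sum>i\<le>B. (-1)^i * real (A choose i) * real (B choose i) * (sin \<theta>^2)^i * cos \<theta>^(A + B - 2*i))"
proof -
  define t where "t i s = real (A choose i) * real (B choose s) * (- sin \<theta>)^i * cos \<theta>^(A - i)
    * sin \<theta>^s * cos \<theta>^(B - s)" for i s
  have "rot_coeff A B A \<theta> = (\<Sum>i\<le>A. if i \<le> B then t i i else 0)"
    unfolding rot_coeff_def t_def[symmetric]
  proof (rule sum.cong[OF refl])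
    fix i assume "i \<in> {..A}"
    then have "(\<Sum>s\<le>B. of_bool (A - i + s = A) * t i s) = (\<Sum>s\<le>B. if i = s then t i s else 0)"
      by (intro sum.cong refl) auto
    then show "(\<Sum>s\<le>B. of_bool (A - i + s = A) * t i s) = (if i \<le> B then t i i else 0)"
      by (simp add: sum.delta)
  qed
  also have "\<dots> = (\<Sum>i\<le>B. t i i)"
    using assms by (intro sum.mono_neutral_cong_right) auto
  also have "\<dots> = (\<Sum>i\<le>B. (-1)^i * real (A choose i) * real (B choose i) * (sin \<theta>^2)^i * cos \<theta>^(A + B - 2*i))"
  proof (rule sum.cong[OF refl])
    fix i assume "i \<in> {..B}"
    then have "A + B - 2*i = (A - i) + (B - i)" using assms by simp
    then have "cos \<theta>^(A + B - 2*i) = cos \<theta>^(A - i) * cos \<theta>^(B - i)"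
      by (simp only: power_add)
    moreover have "(- sin \<theta>)^i * sin \<theta>^i = (-1)^i * (sin \<theta>^2)^i"
      by (simp add: power2_eq_square power_mult_distrib flip: power_minus)
    ultimately show "t i i = (-1)^i * real (A choose i) * real (B choose i) * (sin \<theta>^2)^i * cos \<theta>^(A + B - 2*i)"
      unfolding t_def by (simp add: ac_simps)
  qed
  finally show ?thesis .
qed

lemma signed_power_one_minus_sq_expand:
  fixes r :: real
  assumes "i \<le> B" "B \<le> A"
  shows "(-1)^i * (1 - r^2)^i * r^(A + B - 2*i) = (\<Sum>j\<le>B. (-1)^j * real (i choose j) * r^(A + B - 2*j))"
proof -
  have "(-1)^i * (1 - r^2)^i = (- 1 + r^2)^i"
    by (simp flip: power_mult_distrib)
  also have "\<dots> = (\<Sum>j\<le>i. real (i choose j) * (-1)^j * (r^2)^(i - j))"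
    by (rule binomial_ring)
  finally have "(-1)^i * (1 - r^2)^i * r^(A + B - 2*i)
      = (\<Sum>j\<le>i. real (i choose j) * (-1)^j * (r^2)^(i - j)) * r^(A + B - 2*i)"
    by simp
  also have "\<dots> = (\<Sum>j\<le>i. (-1)^j * real (i choose j) * ((r^2)^(i - j) * r^(A + B - 2*i)))"
    unfolding sum_distrib_right by (simp add: ac_simps)
  also have "\<dots> = (\<Sum>j\<le>i. (-1)^j * real (i choose j) * r^(A + B - 2*j))"
  proof (rule sum.cong[OF refl])
    fix j assume "j \<in> {..i}"
    then have "A + B - 2*j = 2 * (i - j) + (A + B - 2*i)" using assms by simp
    then show "(-1)^j * real (i choose j) * ((r^2)^(i - j) * r^(A + B - 2*i))
        = (-1)^j * real (i choose j) * r^(A + B - 2*j)"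
      by (simp only: power_add power_mult)
  qed
  also have "\<dots> = (\<Sum>j\<le>B. (-1)^j * real (i choose j) * r^(A + B - 2*j))"
    by (rule sum.mono_neutral_left) (use assms in auto)
  finally show ?thesis .
qed

lemma sum_choose_choose_choose:
  assumes "j \<le> B" "B \<le> A"
  shows "(\<Sum>i\<le>B. (A choose i) * (B choose i) * (i choose j)) = (A choose j) * ((A + B - j) choose (B - j))"
proof -
  define g where "g = (\<lambda>i. (A choose i) * (B choose i) * (i choose j))"
  have "(\<Sum>i\<le>B. g i) = (\<Sum>i\<in>{j..B}. g i)"
    by (rule sum.mono_neutral_right) (auto simp: g_def)
  also have "\<dots> = (\<Sum>t\<in>{0..B-j}. g (t + j))"
  proof -
    have "{j..B} = {0 + j..(B - j) + j}" using assms by simp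
    then show ?thesis by (simp only: sum.shift_bounds_cl_nat_ivl)
  qed
  also have "\<dots> = (\<Sum>t\<in>{0..B-j}. (A choose j) * (((A - j) choose t) * (B choose ((B - j) - t))))"
  proof (rule sum.cong)
    fix t assume "t \<in> {0..B-j}"
    then have t: "t + j \<le> B" using assms by simp
    have "(A choose (t + j)) * ((t + j) choose j) = (A choose j) * ((A - j) choose t)"
      using choose_mult[of j "t + j" A] t assms by simp
    moreover have "B choose (t + j) = B choose ((B - j) - t)"
      using binomial_symmetric[of "t + j" B] t by (simp add: diff_diff_add add.commute)
    ultimately show "g (t + j) = (A choose j) * (((A - j) choose t) * (B choose ((B - j) - t)))"
      unfolding g_def by (metis mult.assoc mult.commute)
  qed (auto)
  also have "\<dots> = (A choose j) * (\<Sum>t\<le>B-j. ((A - j) choose t) * (B choose ((B - j) - t)))"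
    by (simp only: sum_distrib_left atLeast0AtMost)
  also have "\<dots> = (A choose j) * ((A - j + B) choose (B - j))"
    by (simp only: vandermonde)
  also have "A - j + B = A + B - j" using assms by simp
  finally show ?thesis unfolding g_def .
qed

lemma sum_choose_choose_choose_eq_fact:
  assumes "j \<le> B" "B \<le> A"
  shows "(\<Sum>i\<le>B. real (A choose i) * real (B choose i) * real (i choose j))
      = fact (A + B - j) / (fact j * fact (A - j) * fact (B - j))"
proof -
  have "(\<Sum>i\<le>B. real (A choose i) * real (B choose i) * real (i choose j))
      = real ((A choose j) * ((A + B - j) choose (B - j)))"
    using sum_choose_choose_choose[OF assms] by (metis (no_types, lifting) of_nat_mult of_nat_sum sum.cong)
  also have "\<dots> = (fact A / (fact j * fact (A - j))) * (fact (A + B - j) / (fact (B - j) * fact (A + B - j - (B - j))))"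
    using assms by (simp add: binomial_fact)
  also have "A + B - j - (B - j) = A" using assms by simp
  finally show ?thesis by (simp add: field_simps)
qed

lemma zernike_sum_reindex:
  fixes r :: real
  assumes "B \<le> A"
  shows "(\<Sum>i\<le>B. (-1)^i * real (A choose i) * real (B choose i) * (1 - r^2)^i * r^(A+B-2*i))
     = (\<Sum>j=0..B. (-1)^j * fact (A+B-j) / (fact j * fact (A-j) * fact (B-j)) * r^(A+B-2*j))"
proof -
  have "(\<Sum>i\<le>B. (-1)^i * real (A choose i) * real (B choose i) * (1 - r^2)^i * r^(A+B-2*i))
      = (\<Sum>i\<le>B. real (A choose i) * real (B choose i) * ((-1)^i * (1 - r^2)^i * r^(A+B-2*i)))"
    by (simp add: ac_simps)
  also have "\<dots> = (\<Sum>i\<le>B. \<Sum>j\<le>B. real (A choose i) * real (B choose i) * ((-1)^j * real (i choose j) * r^(A+B-2*j)))"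
    by (intro sum.cong refl) (simp add: signed_power_one_minus_sq_expand assms sum_distrib_left)
  also have "\<dots> = (\<Sum>j\<le>B. \<Sum>i\<le>B. real (A choose i) * real (B choose i) * ((-1)^j * real (i choose j) * r^(A+B-2*j)))"
    by (rule sum.swap)
  also have "\<dots> = (\<Sum>j\<le>B. ((-1)^j * r^(A+B-2*j)) * (\<Sum>i\<le>B. real (A choose i) * real (B choose i) * real (i choose j)))"
    by (intro sum.cong refl) (simp add: sum_distrib_left ac_simps)
  also have "\<dots> = (\<Sum>j\<le>B. ((-1)^j * r^(A+B-2*j)) * (fact (A + B - j) / (fact j * fact (A - j) * fact (B - j))))"
    by (intro sum.cong refl) (simp add: sum_choose_choose_choose_eq_fact assms)
  also have "\<dots> = (\<Sum>j=0..B. (-1)^j * fact (A+B-j) / (fact j * fact (A-j) * fact (B-j)) * r^(A+B-2*j))"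
    by (simp add: atLeast0AtMost ac_simps)
  finally show ?thesis .
qed

lemma zernR_eq_rot_coeff:
  assumes "a \<le> m" "even (m - a)" "0 \<le> r" "r \<le> 1"
  shows "zernR m a r = rot_coeff ((m + a) div 2) ((m - a) div 2) ((m + a) div 2) (arccos r)"
proof -
  define A where "A = (m + a) div 2"
  define B where "B = (m - a) div 2"
  obtain k where "m - a = 2 * k" using assms(2) by (rule evenE)
  then have AB: "A + B = m" "B \<le> A"
    using assms(1) unfolding A_def B_def by auto
  have "r^2 \<le> 1" using assms by (simp add: abs_square_le_1)
  then have sin_sq: "sin (arccos r)^2 = 1 - r^2"
    using assms by (simp add: sin_arccos)
  have "rot_coeff A B A (arccos r)
      = (\<Sum>i\<le>B. (-1)^i * real (A choose i) * real (B choose i) * (1 - r^2)^i * r^(A + B - 2*i))"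
    unfolding rot_coeff_diag[OF AB(2)] sin_sq using assms by simp
  also have "\<dots> = (\<Sum>j=0..B. (-1)^j * fact (A + B - j) / (fact j * fact (A - j) * fact (B - j)) * r^(A + B - 2*j))"
    by (rule zernike_sum_reindex[OF AB(2)])
  also have "\<dots> = zernR m a r"
    unfolding zernR_def AB(1) unfolding A_def B_def ..
  finally show ?thesis unfolding A_def B_def ..
qed

lemma abs_zernR_le_1:
  assumes "a \<le> m" "even (m - a)" "0 \<le> r" "r \<le> 1"
  shows "\<bar>zernR m a r\<bar> \<le> 1"
  using rot_coeff_diag_sq_le_1 unfolding zernR_eq_rot_coeff[OF assms] abs_square_le_1[symmetric] .

lemma chebU_cos: "chebU m (cos \<phi>) = (\<Sum>k\<le>m. cos ((real m - 2 * real k) * \<phi>))"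
proof (induction m rule: nat_less_induct)
  case (1 m)
  consider "m = 0" | "m = Suc 0" | n where "m = Suc (Suc n)"
    by (metis nat.exhaust)
  then show ?case
  proof cases
    case 3
    have product: "2 * cos \<phi> * cos ((real (Suc n) - 2 * real k) * \<phi>)
        = cos ((real (Suc (Suc n)) - 2 * real k) * \<phi>) + cos ((real n - 2 * real k) * \<phi>)" for k
    proof -
      have "(real (Suc (Suc n)) - 2 * real k) * \<phi> = (real (Suc n) - 2 * real k) * \<phi> + \<phi>"
        "(real n - 2 * real k) * \<phi> = (real (Suc n) - 2 * real k) * \<phi> - \<phi>"
        by (simp_all add: algebra_simps)
      then show ?thesis by (simp only: cos_add cos_diff) simp
    qed
    have "(real n - 2 * real (Suc n)) * \<phi> = - (real (Suc (Suc n)) * \<phi>)"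
      "(real (Suc (Suc n)) - 2 * real (Suc (Suc n))) * \<phi> = - (real (Suc (Suc n)) * \<phi>)"
      by (simp_all add: algebra_simps)
    then have top: "cos ((real n - 2 * real (Suc n)) * \<phi>) = cos (real (Suc (Suc n)) * \<phi>)"
      "cos ((real (Suc (Suc n)) - 2 * real (Suc (Suc n))) * \<phi>) = cos (real (Suc (Suc n)) * \<phi>)"
      by (simp_all only: cos_minus)
    have IH: "chebU (Suc n) (cos \<phi>) = (\<Sum>k\<le>Suc n. cos ((real (Suc n) - 2 * real k) * \<phi>))"
      "chebU n (cos \<phi>) = (\<Sum>k\<le>n. cos ((real n - 2 * real k) * \<phi>))"
      using "1" 3 by (simp_all del: sum.atMost_Suc)
    have "chebU m (cos \<phi>) = 2 * cos \<phi> * chebU (Suc n) (cos \<phi>) - chebU n (cos \<phi>)"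
      using 3 by simp
    also have "\<dots> = (\<Sum>k\<le>Suc n. cos ((real (Suc (Suc n)) - 2 * real k) * \<phi>))
        + (\<Sum>k\<le>Suc n. cos ((real n - 2 * real k) * \<phi>)) - (\<Sum>k\<le>n. cos ((real n - 2 * real k) * \<phi>))"
      unfolding IH sum_distrib_left product sum.distrib ..
    also have "\<dots> = (\<Sum>k\<le>m. cos ((real m - 2 * real k) * \<phi>))"
      by (simp only: 3 sum.atMost_Suc top)
    finally show ?thesis .
  qed (simp_all add: algebra_simps)
qed

lemma abs_chebU_le:
  assumes "\<bar>s\<bar> \<le> 1"
  shows "\<bar>chebU m s\<bar> \<le> real m + 1"
proof -
  have "\<bar>chebU m s\<bar> = \<bar>\<Sum>k\<le>m. cos ((real m - 2 * real k) * arccos s)\<bar>"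
    using chebU_cos[of m "arccos s"] assms by simp
  also have "\<dots> \<le> (\<Sum>k\<le>m. 1)"
    by (intro order.trans[OF sum_abs] sum_mono) simp
  finally show ?thesis by simp
qed

section \<open>Cell weights and design points\<close>

lemma interval_integral_mono_on_Icc:
  fixes f g :: "real \<Rightarrow> real"
  assumes "a \<le> b" "continuous_on {a..b} f" "continuous_on {a..b} g" "\<And>x. x \<in> {a..b} \<Longrightarrow> f x \<le> g x"
  shows "(LBINT x=a..b. f x) \<le> (LBINT x=a..b. g x)"
  unfolding interval_integral_Icc[OF assms(1)]
  by (rule set_integral_mono) (use assms borel_integrable_atLeastAtMost' in auto)

lemma integral_sqrt_one_minus_sq_bounds:
  fixes a b :: real
  assumes "0 \<le> a" "a < b" "b \<le> 1"
  shows "0 < (LBINT s=a..b. sqrt (1 - s^2))" "(LBINT s=a..b. sqrt (1 - s^2)) \<le> b - a"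
proof -
  have "(LBINT s=a..b. b - s) = (b * b - b^2/2) - (b * a - a^2/2)"
    by (rule interval_integral_FTC_finite)
       (use assms in \<open>auto intro!: continuous_intros derivative_eq_intros
          simp: has_real_derivative_iff_has_vector_derivative[symmetric] power2_eq_square\<close>)
  also have "\<dots> = (b - a)^2 / 2" by (simp add: power2_eq_square algebra_simps)
  also have "\<dots> > 0" using assms by simp
  finally have "0 < (LBINT s=a..b. b - s)" .
  also have "\<dots> \<le> (LBINT s=a..b. sqrt (1 - s^2))"
  proof (rule interval_integral_mono_on_Icc)
    fix s assume s: "s \<in> {a..b}"
    then have "(1 - s)^2 \<le> 1 - s^2" using assms by (simp add: power2_eq_square algebra_simps mult_left_le)
    then have "1 - s \<le> sqrt (1 - s^2)" using s assms by (simp add: real_le_rsqrt)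
    then show "b - s \<le> sqrt (1 - s^2)" using assms by simp
  qed (use assms in \<open>auto intro!: continuous_intros\<close>)
  finally show "0 < (LBINT s=a..b. sqrt (1 - s^2))" .
  have "(LBINT s=a..b. sqrt (1 - s^2)) \<le> (LBINT s=a..b. 1)"
    by (rule interval_integral_mono_on_Icc) (use assms in \<open>auto intro!: continuous_intros simp: power_le_one\<close>)
  then show "(LBINT s=a..b. sqrt (1 - s^2)) \<le> b - a" using assms by simp
qed

text \<open>\<open>z1 Q k1\<close> is the \<open>\<lambda>\<close>-centroid of the cell; the \<open>THE\<close> in its definition is well defined
  because the cell has positive mass.\<close>
lemma z1_bounds:
  assumes "k1 < Q"
  shows "0 \<le> z1 Q k1 \<and> z1 Q k1 \<le> 1"
proof -
  define a where "a = real k1 / real Q"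
  define b where "b = real (k1 + 1) / real Q"
  have ab: "0 \<le> a" "a < b" "b \<le> 1"
    using assms unfolding a_def b_def by (auto simp: divide_simps)
  define I0 where "I0 = (LBINT s=a..b. sqrt (1 - s^2))"
  define I1 where "I1 = (LBINT s=a..b. s * sqrt (1 - s^2))"
  have I0: "I0 > 0" unfolding I0_def by (rule integral_sqrt_one_minus_sq_bounds[OF ab])
  have "interval_lebesgue_integrable lborel a b (\<lambda>s. sqrt (1 - s^2))"
    "interval_lebesgue_integrable lborel a b (\<lambda>s. s * sqrt (1 - s^2))"
    using ab by (auto intro!: interval_integrable_continuous_on continuous_intros)
  then have moment: "(LBINT s=a..b. (s - z) * sqrt (1 - s^2)) = I1 - z * I0" for z
    unfolding I0_def I1_def by (simp add: left_diff_distrib)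
  have "z1 Q k1 = I1 / I0"
    unfolding z1_def a_def[symmetric] b_def[symmetric] moment
    by (rule the_equality) (use I0 in \<open>auto simp: field_simps\<close>)
  moreover have "(LBINT s=a..b. (0::real)) \<le> (LBINT s=a..b. (s - a) * sqrt (1 - s^2))"
    using ab by (intro interval_integral_mono_on_Icc)
      (auto intro!: continuous_intros simp: abs_square_le_1)
  moreover have "(LBINT s=a..b. (s - b) * sqrt (1 - s^2)) \<le> (LBINT s=a..b. (0::real))"
    using ab by (intro interval_integral_mono_on_Icc)
      (auto intro!: continuous_intros mult_nonpos_nonneg simp: abs_square_le_1)
  ultimately show ?thesis
    using ab I0 unfolding moment by (auto simp: field_simps)
qed

lemma cellw_bounds:
  assumes "k1 < Q" "0 < P"
  shows "0 \<le> cellw P Q k1 \<and> cellw P Q k1 \<le> 4 / (pi * real P * real Q)"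
proof -
  define a where "a = real k1 / real Q"
  define b where "b = real (k1 + 1) / real Q"
  have ab: "0 \<le> a" "a < b" "b \<le> 1" "b - a = 1 / real Q"
    using assms unfolding a_def b_def by (auto simp: divide_simps)
  define I0 where "I0 = (LBINT s=a..b. sqrt (1 - s^2))"
  have I0: "0 < I0" "I0 \<le> 1 / real Q"
    unfolding I0_def using integral_sqrt_one_minus_sq_bounds[OF ab(1-3)] ab(4) by auto
  have "cellw P Q k1 = 4 / (pi * real P) * I0"
    unfolding cellw_def I0_def a_def b_def by (simp add: field_simps power2_eq_square)
  moreover have "4 / (pi * real P) * I0 \<le> 4 / (pi * real P) * (1 / real Q)"
    using I0 assms by (intro mult_left_mono) auto
  ultimately show ?thesis using I0 assms by simp
qed

section \<open>Concentration of weighted sums of heavy-tailed errors\<close>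

lemma exp_le_quadratic:
  fixes y :: real
  assumes "\<bar>y\<bar> \<le> 1"
  shows "exp y \<le> 1 + y + y^2"
proof (cases "0 \<le> y")
  case True
  then show ?thesis using exp_bound[of y] assms by simp
next
  case False
  define w where "w = - y"
  have w: "0 < w" "w \<le> 1" using False assms unfolding w_def by auto
  have pos: "0 < 1 + w + w^2/2" using w by (simp add: add_pos_nonneg)
  have "exp y = 1 / exp w" unfolding w_def by (simp add: exp_minus field_simps)
  also have "\<dots> \<le> 1 / (1 + w + w^2/2)"
    using exp_lower_Taylor_quadratic[of w] w pos by (intro divide_left_mono) auto
  also have "\<dots> \<le> 1 - w + w^2"
  proof -
    have "(1 - w + w^2) * (1 + w + w^2/2) = 1 + w^2/2 + w^3/2 + w^4/2"
      by (simp add: power2_eq_square power3_eq_cube power4_eq_xxxx field_simps)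
    also have "\<dots> \<ge> 1" using w by simp
    finally show ?thesis using pos by (simp add: divide_le_eq)
  qed
  finally show ?thesis unfolding w_def by simp
qed

context prob_space
begin

lemma nn_integral_exp_le_of_bounded_centered:
  fixes X :: "'a \<Rightarrow> real"
  assumes [measurable]: "X \<in> borel_measurable M"
    and bnd: "\<And>x. x \<in> space M \<Longrightarrow> \<bar>X x\<bar> \<le> B"
    and mean: "expectation X = 0" and var: "expectation (\<lambda>x. (X x)^2) \<le> s"
    and l: "0 < l" "l * B \<le> 1"
  shows "(\<integral>\<^sup>+x. ennreal (exp (l * X x)) \<partial>M) \<le> ennreal (exp (l^2 * s))"
proof -
  have int: "integrable M X"
    by (rule integrable_const_bound[where B=B]) (use bnd in auto)
  have int_sq: "integrable M (\<lambda>x. (X x)^2)"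
    by (rule integrable_const_bound[where B="B^2"])
      (use bnd in \<open>auto intro!: AE_I2 simp: abs_le_square_iff, metis abs_ge_zero power2_abs power_mono\<close>)
  have int_exp: "integrable M (\<lambda>x. exp (l * X x))"
    by (rule integrable_const_bound[where B="exp (l * B)"])
      (use bnd l in \<open>auto intro!: AE_I2 mult_left_mono simp: abs_le_iff\<close>)
  have "expectation (\<lambda>x. exp (l * X x)) \<le> expectation (\<lambda>x. 1 + l * X x + l^2 * (X x)^2)"
  proof (rule integral_mono)
    fix x assume "x \<in> space M"
    then have "\<bar>l * X x\<bar> \<le> 1"
      using bnd l by (metis abs_mult abs_of_pos mult_left_mono order.trans less_imp_le)
    then show "exp (l * X x) \<le> 1 + l * X x + l^2 * (X x)^2"
      using exp_le_quadratic[of "l * X x"] by (simp add: power_mult_distrib)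
  qed (use int int_sq int_exp in auto)
  also have "\<dots> = 1 + l^2 * expectation (\<lambda>x. (X x)^2)"
    using int int_sq mean by (simp add: prob_space)
  also have "\<dots> \<le> exp (l^2 * s)"
    using var by (intro order.trans[OF _ exp_ge_add_one_self] add_left_mono mult_left_mono) auto
  finally show ?thesis
    using int_exp by (simp add: nn_integral_eq_integral ennreal_leI)
qed

text \<open>A Bernstein-type Chernoff bound: the variance, not the (large) range \<open>B\<close>, enters the exponent.\<close>
lemma prob_sum_ge_le_exp:
  fixes Z :: "'i \<Rightarrow> 'a \<Rightarrow> real"
  assumes fin: "finite I" and ind: "indep_vars (\<lambda>_. borel) Z I"
    and bnd: "\<And>i x. i \<in> I \<Longrightarrow> x \<in> space M \<Longrightarrow> \<bar>Z i x\<bar> \<le> B"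
    and mean: "\<And>i. i \<in> I \<Longrightarrow> expectation (Z i) = 0"
    and var: "\<And>i. i \<in> I \<Longrightarrow> expectation (\<lambda>x. (Z i x)^2) \<le> s"
    and l: "0 < l" "l * B \<le> 1"
  shows "prob {x\<in>space M. a \<le> (\<Sum>i\<in>I. Z i x)} \<le> exp (- l * a + real (card I) * l^2 * s)"
proof -
  have [measurable]: "i \<in> I \<Longrightarrow> Z i \<in> borel_measurable M" for i
    using ind unfolding indep_vars_def by auto
  have "ennreal (prob {x\<in>space M. a \<le> (\<Sum>i\<in>I. Z i x)})
      \<le> ennreal (exp (- l * a)) * (\<integral>\<^sup>+x\<in>space M. exp (l * (\<Sum>i\<in>I. Z i x)) \<partial>M)"
    unfolding emeasure_eq_measure[symmetric] by (intro Chernoff_ineq_nn_integral_ge l) auto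
  also have "(\<integral>\<^sup>+x\<in>space M. exp (l * (\<Sum>i\<in>I. Z i x)) \<partial>M) = (\<integral>\<^sup>+x. (\<Prod>i\<in>I. ennreal (exp (l * Z i x))) \<partial>M)"
    by (intro nn_integral_cong) (simp_all add: sum_distrib_left exp_sum fin prod_ennreal)
  also have "\<dots> = (\<Prod>i\<in>I. \<integral>\<^sup>+x. ennreal (exp (l * Z i x)) \<partial>M)"
    by (intro indep_vars_nn_integral fin indep_vars_compose2[OF ind]) auto
  also have "ennreal (exp (- l * a)) * \<dots> \<le> ennreal (exp (- l * a)) * (\<Prod>i\<in>I. ennreal (exp (l^2 * s)))"
    using bnd mean var l
    by (intro mult_left_mono prod_mono_ennreal nn_integral_exp_le_of_bounded_centered) auto
  also have "\<dots> = ennreal (exp (- l * a) * (\<Prod>i\<in>I. exp (l^2 * s)))"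
    by (simp add: ennreal_mult ennreal_power)
  also have "exp (- l * a) * (\<Prod>i\<in>I. exp (l^2 * s)) = exp (- l * a + real (card I) * l^2 * s)"
    by (simp add: exp_add[symmetric] exp_of_nat_mult[symmetric] mult.assoc)
  finally show ?thesis
    by (subst (asm) ennreal_le_iff) simp_all
qed

lemma prob_abs_sum_ge_le_exp:
  fixes Z :: "'i \<Rightarrow> 'a \<Rightarrow> real"
  assumes fin: "finite I" and ind: "indep_vars (\<lambda>_. borel) Z I"
    and bnd: "\<And>i x. i \<in> I \<Longrightarrow> x \<in> space M \<Longrightarrow> \<bar>Z i x\<bar> \<le> B"
    and mean: "\<And>i. i \<in> I \<Longrightarrow> expectation (Z i) = 0"
    and var: "\<And>i. i \<in> I \<Longrightarrow> expectation (\<lambda>x. (Z i x)^2) \<le> s"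
    and l: "0 < l" "l * B \<le> 1"
  shows "prob {x\<in>space M. a \<le> \<bar>\<Sum>i\<in>I. Z i x\<bar>} \<le> 2 * exp (- l * a + real (card I) * l^2 * s)"
proof -
  have [measurable]: "i \<in> I \<Longrightarrow> Z i \<in> borel_measurable M" for i
    using ind unfolding indep_vars_def by auto
  have ind_neg: "indep_vars (\<lambda>_. borel) (\<lambda>i x. - Z i x) I"
    by (rule indep_vars_compose2[OF ind, where Y="\<lambda>i y. - y"]) measurable
  have "prob {x\<in>space M. a \<le> \<bar>\<Sum>i\<in>I. Z i x\<bar>}
      \<le> prob ({x\<in>space M. a \<le> (\<Sum>i\<in>I. Z i x)} \<union> {x\<in>space M. a \<le> (\<Sum>i\<in>I. - Z i x)})"
    by (intro finite_measure_mono) (auto simp: sum_negf abs_if)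
  also have "\<dots> \<le> prob {x\<in>space M. a \<le> (\<Sum>i\<in>I. Z i x)} + prob {x\<in>space M. a \<le> (\<Sum>i\<in>I. - Z i x)}"
    by (rule measure_Un_le) measurable
  also have "\<dots> \<le> 2 * exp (- l * a + real (card I) * l^2 * s)"
  proof -
    have "prob {x\<in>space M. a \<le> (\<Sum>i\<in>I. - Z i x)} \<le> exp (- l * a + real (card I) * l^2 * s)"
      by (rule prob_sum_ge_le_exp[OF fin ind_neg _ _ _ l]) (use bnd mean var in auto)
    then show ?thesis
      using prob_sum_ge_le_exp[OF fin ind bnd mean var l, of a] by simp
  qed
  finally show ?thesis .
qed

lemma expectation_eq_of_distr_eq:
  fixes f :: "real \<Rightarrow> real"
  assumes [measurable]: "X \<in> borel_measurable M" "Y \<in> borel_measurable M" "f \<in> borel_measurable borel"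
    and d: "distr M borel X = distr M borel Y"
  shows "expectation (\<lambda>x. f (X x)) = expectation (\<lambda>x. f (Y x))"
proof -
  have "expectation (\<lambda>x. f (X x)) = integral\<^sup>L (distr M borel X) f"
    by (rule integral_distr[symmetric]) auto
  also have "\<dots> = integral\<^sup>L (distr M borel Y) f" unfolding d ..
  also have "\<dots> = expectation (\<lambda>x. f (Y x))"
    by (rule integral_distr) auto
  finally show ?thesis .
qed

lemma integrable_iff_of_distr_eq:
  assumes [measurable]: "X \<in> borel_measurable M" "Y \<in> borel_measurable M" "f \<in> borel_measurable borel"
    and d: "distr M borel X = distr M borel Y"
  shows "integrable M (\<lambda>x. f (X x)) \<longleftrightarrow> integrable M (\<lambda>x. (f :: real \<Rightarrow> real) (Y x))"
proof -
  have "integrable M (\<lambda>x. f (X x)) \<longleftrightarrow> integrable (distr M borel X) f"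
    by (rule integrable_distr_eq[symmetric]) auto
  also have "\<dots> \<longleftrightarrow> integrable (distr M borel Y) f" unfolding d ..
  also have "\<dots> \<longleftrightarrow> integrable M (\<lambda>x. f (Y x))"
    by (rule integrable_distr_eq) auto
  finally show ?thesis .
qed

lemma prob_eq_of_distr_eq:
  assumes [measurable]: "X \<in> borel_measurable M" "Y \<in> borel_measurable M" "S \<in> sets borel"
    and d: "distr M borel X = distr M borel Y"
  shows "prob {x\<in>space M. X x \<in> S} = prob {x\<in>space M. Y x \<in> S}"
proof -
  have "prob {x\<in>space M. X x \<in> S} = measure (distr M borel X) S"
    by (subst measure_distr) (auto intro!: arg_cong[where f=prob])
  also have "\<dots> = measure (distr M borel Y) S" unfolding d ..
  also have "\<dots> = prob {x\<in>space M. Y x \<in> S}"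
    by (subst measure_distr) (auto intro!: arg_cong[where f=prob])
  finally show ?thesis .
qed

end

lemma abs_powr_le_one_plus_abs_powr:
  fixes x p \<kappa> :: real
  assumes "0 \<le> p" "p \<le> \<kappa>"
  shows "\<bar>x\<bar> powr p \<le> 1 + \<bar>x\<bar> powr \<kappa>"
proof (cases "\<bar>x\<bar> \<le> 1")
  case True
  then have "\<bar>x\<bar> powr p \<le> 1"
    using powr_mono'[OF assms(1), of "\<bar>x\<bar>"] by (cases "x = 0") auto
  then show ?thesis by (simp add: add_increasing2)
next
  case False
  then have "\<bar>x\<bar> powr p \<le> \<bar>x\<bar> powr \<kappa>"
    using powr_mono[OF assms(2), of "\<bar>x\<bar>"] by simp
  then show ?thesis by simp
qed

lemma abs_le_powr_mult_powr:
  fixes x \<tau> \<kappa> :: real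
  assumes "0 < \<tau>" "\<tau> < \<bar>x\<bar>" "1 < \<kappa>"
  shows "\<bar>x\<bar> \<le> \<bar>x\<bar> powr \<kappa> * \<tau> powr (1 - \<kappa>)"
proof -
  have "1 \<le> \<bar>x\<bar> powr (\<kappa> - 1) / \<tau> powr (\<kappa> - 1)"
    using powr_mono2[of "\<kappa> - 1" \<tau> "\<bar>x\<bar>"] assms by simp
  then have "\<bar>x\<bar> * 1 \<le> \<bar>x\<bar> * (\<bar>x\<bar> powr (\<kappa> - 1) / \<tau> powr (\<kappa> - 1))"
    by (intro mult_left_mono) auto
  also have "\<dots> = \<bar>x\<bar> powr \<kappa> * \<tau> powr (1 - \<kappa>)"
    using assms by (simp add: powr_diff powr_minus field_simps)
  finally show ?thesis by simp
qed

definition truncate :: "real \<Rightarrow> real \<Rightarrow> real" where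
  "truncate \<tau> y = (if \<bar>y\<bar> \<le> \<tau> then y else 0)"

lemma truncate_measurable [measurable]: "truncate \<tau> \<in> borel_measurable borel"
  unfolding truncate_def by measurable

lemma abs_truncate_le: "0 \<le> \<tau> \<Longrightarrow> \<bar>truncate \<tau> y\<bar> \<le> \<tau>"
  unfolding truncate_def by auto

lemma truncate_sq_le: "(truncate \<tau> y)^2 \<le> y^2" "0 \<le> \<tau> \<Longrightarrow> (truncate \<tau> y)^2 \<le> \<tau>^2"
  unfolding truncate_def by (auto simp: abs_le_square_iff[symmetric])

locale noise_law = prob_space M for M :: "'a measure" +
  fixes e0 :: "'a \<Rightarrow> real" and \<kappa> :: real
  assumes e0_measurable [measurable]: "e0 \<in> borel_measurable M"
    and e0_mean: "expectation e0 = 0"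
    and kappa_ge_2: "2 \<le> \<kappa>"
    and e0_moment: "integrable M (\<lambda>\<omega>. \<bar>e0 \<omega>\<bar> powr \<kappa>)"
begin

lemma integrable_e0_sq: "integrable M (\<lambda>\<omega>. (e0 \<omega>)^2)"
  by (rule Bochner_Integration.integrable_bound[where f="\<lambda>\<omega>. 1 + \<bar>e0 \<omega>\<bar> powr \<kappa>"])
    (use e0_moment abs_powr_le_one_plus_abs_powr[of 2 \<kappa>] kappa_ge_2 in \<open>auto intro!: AE_I2\<close>)

lemma integrable_e0: "integrable M e0"
  by (rule Bochner_Integration.integrable_bound[where f="\<lambda>\<omega>. 1 + \<bar>e0 \<omega>\<bar> powr \<kappa>"])
    (use e0_moment abs_powr_le_one_plus_abs_powr[of 1 \<kappa>] kappa_ge_2 in \<open>auto intro!: AE_I2\<close>)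

lemma prob_abs_e0_gt:
  assumes "0 < \<tau>"
  shows "prob {\<omega>\<in>space M. \<tau> < \<bar>e0 \<omega>\<bar>} \<le> expectation (\<lambda>\<omega>. \<bar>e0 \<omega>\<bar> powr \<kappa>) / \<tau> powr \<kappa>"
proof -
  have "prob {\<omega>\<in>space M. \<tau> < \<bar>e0 \<omega>\<bar>} \<le> prob {\<omega>\<in>space M. \<tau> powr \<kappa> \<le> \<bar>e0 \<omega>\<bar> powr \<kappa>}"
    using assms kappa_ge_2 by (intro finite_measure_mono) (auto intro!: powr_mono2)
  also have "\<dots> \<le> expectation (\<lambda>\<omega>. \<bar>e0 \<omega>\<bar> powr \<kappa>) / \<tau> powr \<kappa>"
    using assms by (intro integral_Markov_inequality_measure[OF e0_moment, where A="space M"]) auto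
  finally show ?thesis .
qed

text \<open>Since \<open>e0\<close> is centred, truncation at level \<open>\<tau>\<close> shifts the mean only by the tail.\<close>
lemma abs_expectation_truncate_le:
  assumes "0 < \<tau>"
  shows "\<bar>expectation (\<lambda>\<omega>. truncate \<tau> (e0 \<omega>))\<bar>
      \<le> expectation (\<lambda>\<omega>. \<bar>e0 \<omega>\<bar> powr \<kappa>) * \<tau> powr (1 - \<kappa>)"
proof -
  define h where "h x = (if \<bar>x\<bar> \<le> \<tau> then 0 else x)" for x :: real
  have h_le: "\<bar>h x\<bar> \<le> \<bar>x\<bar> powr \<kappa> * \<tau> powr (1 - \<kappa>)" for x
    unfolding h_def using abs_le_powr_mult_powr[OF assms, of x \<kappa>] kappa_ge_2 by auto
  have int_h: "integrable M (\<lambda>\<omega>. h (e0 \<omega>))"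
    by (rule Bochner_Integration.integrable_bound[where f="\<lambda>\<omega>. \<bar>e0 \<omega>\<bar> powr \<kappa> * \<tau> powr (1 - \<kappa>)"])
      (use e0_moment h_le in \<open>auto intro!: AE_I2 simp: h_def\<close>)
  have "expectation (\<lambda>\<omega>. truncate \<tau> (e0 \<omega>)) = expectation (\<lambda>\<omega>. e0 \<omega> - h (e0 \<omega>))"
    by (rule Bochner_Integration.integral_cong) (simp_all add: h_def truncate_def)
  also have "\<dots> = - expectation (\<lambda>\<omega>. h (e0 \<omega>))"
    using integrable_e0 int_h e0_mean by simp
  finally have "\<bar>expectation (\<lambda>\<omega>. truncate \<tau> (e0 \<omega>))\<bar> = \<bar>expectation (\<lambda>\<omega>. h (e0 \<omega>))\<bar>"
    by simp
  also have "\<dots> \<le> expectation (\<lambda>\<omega>. \<bar>h (e0 \<omega>)\<bar>)"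
    using integral_norm_bound[of M "\<lambda>\<omega>. h (e0 \<omega>)"] by simp
  also have "\<dots> \<le> expectation (\<lambda>\<omega>. \<bar>e0 \<omega>\<bar> powr \<kappa> * \<tau> powr (1 - \<kappa>))"
    using int_h e0_moment h_le by (intro integral_mono) auto
  finally show ?thesis by simp
qed

lemma variance_truncate_le:
  assumes "0 \<le> \<tau>"
  shows "expectation (\<lambda>\<omega>. (truncate \<tau> (e0 \<omega>) - expectation (\<lambda>\<omega>. truncate \<tau> (e0 \<omega>)))^2)
    \<le> expectation (\<lambda>\<omega>. (e0 \<omega>)^2)"
proof -
  define \<mu> where "\<mu> = expectation (\<lambda>\<omega>. truncate \<tau> (e0 \<omega>))"
  have int: "integrable M (\<lambda>\<omega>. truncate \<tau> (e0 \<omega>))"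
    by (rule integrable_const_bound[where B=\<tau>]) (use abs_truncate_le assms in auto)
  have int_sq: "integrable M (\<lambda>\<omega>. (truncate \<tau> (e0 \<omega>))^2)"
    by (rule integrable_const_bound[where B="\<tau>^2"]) (use truncate_sq_le(2) assms in auto)
  have "expectation (\<lambda>\<omega>. (truncate \<tau> (e0 \<omega>) - \<mu>)^2)
      = expectation (\<lambda>\<omega>. (truncate \<tau> (e0 \<omega>))^2 - 2 * \<mu> * truncate \<tau> (e0 \<omega>) + \<mu>^2)"
    by (simp add: power2_diff algebra_simps)
  also have "\<dots> = expectation (\<lambda>\<omega>. (truncate \<tau> (e0 \<omega>))^2) - \<mu>^2"
    using int int_sq by (simp add: prob_space \<mu>_def power2_eq_square)
  also have "\<dots> \<le> expectation (\<lambda>\<omega>. (truncate \<tau> (e0 \<omega>))^2)"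
    by simp
  also have "\<dots> \<le> expectation (\<lambda>\<omega>. (e0 \<omega>)^2)"
    by (rule integral_mono[OF int_sq integrable_e0_sq truncate_sq_le(1)])
  finally show ?thesis unfolding \<mu>_def .
qed

lemma abs_expectation_truncate_le_level:
  assumes "0 \<le> \<tau>"
  shows "\<bar>expectation (\<lambda>\<omega>. truncate \<tau> (e0 \<omega>))\<bar> \<le> \<tau>"
proof -
  have "\<bar>expectation (\<lambda>\<omega>. truncate \<tau> (e0 \<omega>))\<bar> \<le> expectation (\<lambda>\<omega>. \<bar>truncate \<tau> (e0 \<omega>)\<bar>)"
    using integral_norm_bound[of M "\<lambda>\<omega>. truncate \<tau> (e0 \<omega>)"] by simp
  also have "\<dots> \<le> expectation (\<lambda>\<omega>. \<tau>)"
    using abs_truncate_le assms by (intro integral_mono integrable_const_bound[where B=\<tau>]) auto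
  finally show ?thesis by (simp add: prob_space)
qed

lemma scaled_truncated_copy:
  assumes X: "X \<in> borel_measurable M" "distr M borel X = distr M borel e0"
    and a: "\<bar>a\<bar> \<le> 1" and \<tau>: "0 < \<tau>"
  defines "Z \<equiv> \<lambda>\<omega>. a * (truncate \<tau> (X \<omega>) - expectation (\<lambda>\<omega>. truncate \<tau> (e0 \<omega>)))"
  shows "\<bar>Z \<omega>\<bar> \<le> 2 * \<tau>" and "expectation Z = 0"
    and "expectation (\<lambda>\<omega>. (Z \<omega>)^2) \<le> expectation (\<lambda>\<omega>. (e0 \<omega>)^2)"
proof -
  define \<mu> where "\<mu> = expectation (\<lambda>\<omega>. truncate \<tau> (e0 \<omega>))"
  have "\<bar>Z \<omega>\<bar> \<le> 1 * (\<tau> + \<tau>)"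
    unfolding Z_def abs_mult using a abs_truncate_le[of \<tau> "X \<omega>"] \<tau> abs_expectation_truncate_le_level[of \<tau>]
    by (intro mult_mono) auto
  then show "\<bar>Z \<omega>\<bar> \<le> 2 * \<tau>" by simp
  have "integrable M (\<lambda>\<omega>. truncate \<tau> (X \<omega>))"
    by (rule integrable_const_bound[where B=\<tau>]) (use abs_truncate_le \<tau> X in auto)
  moreover have "expectation (\<lambda>\<omega>. truncate \<tau> (X \<omega>)) = \<mu>"
    unfolding \<mu>_def by (rule expectation_eq_of_distr_eq) (use X in auto)
  ultimately show "expectation Z = 0"
    unfolding Z_def \<mu>_def[symmetric] by (simp add: prob_space)
  have "expectation (\<lambda>\<omega>. (Z \<omega>)^2) = a^2 * expectation (\<lambda>\<omega>. (truncate \<tau> (X \<omega>) - \<mu>)^2)"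
    unfolding Z_def \<mu>_def[symmetric] power_mult_distrib by simp
  also have "\<dots> \<le> 1 * expectation (\<lambda>\<omega>. (truncate \<tau> (X \<omega>) - \<mu>)^2)"
    using a by (intro mult_right_mono) (auto simp: abs_square_le_1 integral_nonneg_AE simp del: abs_le_square_iff)
  also have "\<dots> = expectation (\<lambda>\<omega>. (truncate \<tau> (e0 \<omega>) - \<mu>)^2)"
    using expectation_eq_of_distr_eq[of X e0 "\<lambda>y. (truncate \<tau> y - \<mu>)^2"] X by simp
  also have "\<dots> \<le> expectation (\<lambda>\<omega>. (e0 \<omega>)^2)"
    using variance_truncate_le \<tau> unfolding \<mu>_def by simp
  finally show "expectation (\<lambda>\<omega>. (Z \<omega>)^2) \<le> expectation (\<lambda>\<omega>. (e0 \<omega>)^2)" .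
qed

lemma abs_sum_centered_ge:
  fixes b x :: "'k \<Rightarrow> real"
  assumes "finite K" and b: "\<And>k. k \<in> K \<Longrightarrow> \<bar>b k\<bar> \<le> \<rho>" and \<rho>: "0 < \<rho>"
    and \<mu>: "real (card K) * \<bar>\<mu>\<bar> \<le> D" and large: "2 * \<rho> * D < \<bar>\<Sum>k\<in>K. b k * x k\<bar>"
  shows "D \<le> \<bar>\<Sum>k\<in>K. b k / \<rho> * (x k - \<mu>)\<bar>"
proof -
  have "\<rho> * (\<Sum>k\<in>K. b k / \<rho> * (x k - \<mu>)) = (\<Sum>k\<in>K. b k * x k) - \<mu> * (\<Sum>k\<in>K. b k)"
    unfolding sum_distrib_left sum_subtractf[symmetric] using \<rho>
    by (intro sum.cong refl) (simp add: field_simps)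
  moreover have "\<bar>\<mu> * (\<Sum>k\<in>K. b k)\<bar> \<le> \<rho> * D"
  proof -
    have "\<bar>\<Sum>k\<in>K. b k\<bar> \<le> real (card K) * \<rho>"
      using b sum_mono[of K "\<lambda>k. \<bar>b k\<bar>" "\<lambda>_. \<rho>"] by (intro order.trans[OF sum_abs]) auto
    then have "\<bar>\<mu>\<bar> * \<bar>\<Sum>k\<in>K. b k\<bar> \<le> \<bar>\<mu>\<bar> * (real (card K) * \<rho>)"
      by (rule mult_left_mono) simp
    then have "\<bar>\<mu> * (\<Sum>k\<in>K. b k)\<bar> \<le> \<rho> * (real (card K) * \<bar>\<mu>\<bar>)"
      by (simp add: abs_mult ac_simps)
    also have "\<dots> \<le> \<rho> * D"
      using \<mu> \<rho> by (intro mult_left_mono) auto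
    finally show ?thesis .
  qed
  moreover have "\<rho> * \<bar>\<Sum>k\<in>K. b k / \<rho> * (x k - \<mu>)\<bar> = \<bar>\<rho> * (\<Sum>k\<in>K. b k / \<rho> * (x k - \<mu>))\<bar>"
    using \<rho> by (simp add: abs_mult)
  ultimately have "\<rho> * D < \<rho> * \<bar>\<Sum>k\<in>K. b k / \<rho> * (x k - \<mu>)\<bar>"
    using large abs_triangle_ineq2[of "\<Sum>k\<in>K. b k * x k" "\<mu> * (\<Sum>k\<in>K. b k)"] by linarith
  then show ?thesis using \<rho> by simp
qed

text \<open>On the event that no error exceeds \<open>\<tau>\<close>, the errors coincide with their truncations, whose
  centred versions are bounded and satisfy the Chernoff bound.\<close>
lemma prob_truncated_weighted_sum_gt:
  fixes \<epsilon> :: "'k \<Rightarrow> 'a \<Rightarrow> real" and b :: "'k \<Rightarrow> real"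
  assumes fin: "finite K" and ind: "indep_vars (\<lambda>_. borel) \<epsilon> K"
    and distr: "\<And>k. k \<in> K \<Longrightarrow> distr M borel (\<epsilon> k) = distr M borel e0"
    and b: "\<And>k. k \<in> K \<Longrightarrow> \<bar>b k\<bar> \<le> \<rho>" and \<rho>: "0 < \<rho>" and \<tau>: "0 < \<tau>"
    and l: "0 < l" "2 * l * \<tau> \<le> 1"
    and D: "real (card K) * \<bar>expectation (\<lambda>\<omega>. truncate \<tau> (e0 \<omega>))\<bar> \<le> D"
  shows "prob {\<omega>\<in>space M. (\<forall>k\<in>K. \<bar>\<epsilon> k \<omega>\<bar> \<le> \<tau>) \<and> 2 * \<rho> * D < \<bar>\<Sum>k\<in>K. b k * \<epsilon> k \<omega>\<bar>}
    \<le> 2 * exp (- l * D + real (card K) * l^2 * expectation (\<lambda>\<omega>. (e0 \<omega>)^2))"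
proof -
  have [measurable]: "k \<in> K \<Longrightarrow> \<epsilon> k \<in> borel_measurable M" for k
    using ind unfolding indep_vars_def by auto
  define \<mu> where "\<mu> = expectation (\<lambda>\<omega>. truncate \<tau> (e0 \<omega>))"
  define Z where "Z k \<omega> = b k / \<rho> * (truncate \<tau> (\<epsilon> k \<omega>) - \<mu>)" for k \<omega>
  have "\<bar>b k / \<rho>\<bar> \<le> 1" if "k \<in> K" for k
    using b[OF that] \<rho> by (simp add: abs_divide)
  then have copy: "\<bar>Z k \<omega>\<bar> \<le> 2 * \<tau>" "expectation (Z k) = 0"
    "expectation (\<lambda>\<omega>. (Z k \<omega>)^2) \<le> expectation (\<lambda>\<omega>. (e0 \<omega>)^2)" if "k \<in> K" for k \<omega>
    using scaled_truncated_copy[of "\<epsilon> k" "b k / \<rho>" \<tau>] distr[OF that] \<tau> that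
    unfolding Z_def \<mu>_def by auto
  have "indep_vars (\<lambda>_. borel) Z K"
    unfolding Z_def by (rule indep_vars_compose2[OF ind, where Y="\<lambda>k y. b k / \<rho> * (truncate \<tau> y - \<mu>)"]) measurable
  then have tail: "prob {\<omega>\<in>space M. D \<le> \<bar>\<Sum>k\<in>K. Z k \<omega>\<bar>}
      \<le> 2 * exp (- l * D + real (card K) * l^2 * expectation (\<lambda>\<omega>. (e0 \<omega>)^2))"
    using l copy by (intro prob_abs_sum_ge_le_exp[OF fin _, where B="2 * \<tau>"]) auto
  have "D \<le> \<bar>\<Sum>k\<in>K. Z k \<omega>\<bar>"
    if "\<forall>k\<in>K. \<bar>\<epsilon> k \<omega>\<bar> \<le> \<tau>" "2 * \<rho> * D < \<bar>\<Sum>k\<in>K. b k * \<epsilon> k \<omega>\<bar>" for \<omega>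
  proof -
    have "(\<Sum>k\<in>K. Z k \<omega>) = (\<Sum>k\<in>K. b k / \<rho> * (\<epsilon> k \<omega> - \<mu>))"
      using that(1) unfolding Z_def truncate_def by (intro sum.cong) auto
    then show ?thesis
      using abs_sum_centered_ge[OF fin b \<rho> _ that(2)] D unfolding \<mu>_def by simp
  qed
  then have "{\<omega>\<in>space M. (\<forall>k\<in>K. \<bar>\<epsilon> k \<omega>\<bar> \<le> \<tau>) \<and> 2 * \<rho> * D < \<bar>\<Sum>k\<in>K. b k * \<epsilon> k \<omega>\<bar>}
      \<subseteq> {\<omega>\<in>space M. D \<le> \<bar>\<Sum>k\<in>K. Z k \<omega>\<bar>}"
    by blast
  moreover have "{\<omega>\<in>space M. D \<le> \<bar>\<Sum>k\<in>K. Z k \<omega>\<bar>} \<in> sets M"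
    unfolding Z_def by measurable
  ultimately have "prob {\<omega>\<in>space M. (\<forall>k\<in>K. \<bar>\<epsilon> k \<omega>\<bar> \<le> \<tau>) \<and> 2 * \<rho> * D < \<bar>\<Sum>k\<in>K. b k * \<epsilon> k \<omega>\<bar>}
      \<le> prob {\<omega>\<in>space M. D \<le> \<bar>\<Sum>k\<in>K. Z k \<omega>\<bar>}"
    by (rule finite_measure_mono)
  with tail show ?thesis by linarith
qed

lemma prob_exists_abs_gt:
  assumes K: "finite K" and [measurable]: "\<And>k. k \<in> K \<Longrightarrow> \<epsilon> k \<in> borel_measurable M"
    and distr: "\<And>k. k \<in> K \<Longrightarrow> distr M borel (\<epsilon> k) = distr M borel e0" and \<tau>: "0 < \<tau>"
  shows "prob {\<omega>\<in>space M. \<exists>k\<in>K. \<tau> < \<bar>\<epsilon> k \<omega>\<bar>}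
    \<le> real (card K) * (expectation (\<lambda>\<omega>. \<bar>e0 \<omega>\<bar> powr \<kappa>) / \<tau> powr \<kappa>)"
proof -
  have "prob {\<omega>\<in>space M. \<exists>k\<in>K. \<tau> < \<bar>\<epsilon> k \<omega>\<bar>} = prob (\<Union>k\<in>K. {\<omega>\<in>space M. \<tau> < \<bar>\<epsilon> k \<omega>\<bar>})"
    by (rule arg_cong[where f=prob]) auto
  also have "\<dots> \<le> (\<Sum>k\<in>K. prob {\<omega>\<in>space M. \<tau> < \<bar>\<epsilon> k \<omega>\<bar>})"
    by (rule measure_UNION_le[OF K]) measurable
  also have "\<dots> = (\<Sum>k\<in>K. prob {\<omega>\<in>space M. \<tau> < \<bar>e0 \<omega>\<bar>})"
  proof (rule sum.cong[OF refl])
    fix k assume "k \<in> K"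
    have "prob {\<omega>\<in>space M. \<epsilon> k \<omega> \<in> {y. \<tau> < \<bar>y\<bar>}} = prob {\<omega>\<in>space M. e0 \<omega> \<in> {y. \<tau> < \<bar>y\<bar>}}"
      by (rule prob_eq_of_distr_eq) (use distr \<open>k \<in> K\<close> in auto)
    then show "prob {\<omega>\<in>space M. \<tau> < \<bar>\<epsilon> k \<omega>\<bar>} = prob {\<omega>\<in>space M. \<tau> < \<bar>e0 \<omega>\<bar>}"
      by simp
  qed
  also have "\<dots> \<le> (\<Sum>k\<in>K. expectation (\<lambda>\<omega>. \<bar>e0 \<omega>\<bar> powr \<kappa>) / \<tau> powr \<kappa>)"
    by (intro sum_mono prob_abs_e0_gt[OF \<tau>])
  finally show ?thesis by simp
qed

lemma prob_truncated_complex_weighted_sum_gt: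
  fixes \<epsilon> :: "'k \<Rightarrow> 'a \<Rightarrow> real" and c :: "'k \<Rightarrow> complex"
  assumes K: "finite K" and ind: "indep_vars (\<lambda>_. borel) \<epsilon> K"
    and distr: "\<And>k. k \<in> K \<Longrightarrow> distr M borel (\<epsilon> k) = distr M borel e0"
    and c: "\<And>k. k \<in> K \<Longrightarrow> cmod (c k) \<le> \<rho>" and \<rho>: "0 < \<rho>" and \<tau>: "0 < \<tau>"
    and l: "0 < l" "2 * l * \<tau> \<le> 1"
    and D: "real (card K) * \<bar>expectation (\<lambda>\<omega>. truncate \<tau> (e0 \<omega>))\<bar> \<le> D"
  shows "prob {\<omega>\<in>space M. (\<forall>k\<in>K. \<bar>\<epsilon> k \<omega>\<bar> \<le> \<tau>) \<and> 4 * \<rho> * D < cmod (\<Sum>k\<in>K. c k * \<epsilon> k \<omega>)}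
    \<le> 4 * exp (- l * D + real (card K) * l^2 * expectation (\<lambda>\<omega>. (e0 \<omega>)^2))"
proof -
  have [measurable]: "k \<in> K \<Longrightarrow> \<epsilon> k \<in> borel_measurable M" for k
    using ind unfolding indep_vars_def by auto
  note K [simp]
  define F where "F f = {\<omega>\<in>space M. (\<forall>k\<in>K. \<bar>\<epsilon> k \<omega>\<bar> \<le> \<tau>) \<and> 2 * \<rho> * D < \<bar>\<Sum>k\<in>K. f (c k) * \<epsilon> k \<omega>\<bar>}"
    for f :: "complex \<Rightarrow> real"
  have F_le: "prob (F f) \<le> 2 * exp (- l * D + real (card K) * l^2 * expectation (\<lambda>\<omega>. (e0 \<omega>)^2))"
    if "f = Re \<or> f = Im" for f
    unfolding F_def using that c
    by (intro prob_truncated_weighted_sum_gt[OF K ind distr _ \<rho> \<tau> l D])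
      (auto intro: order.trans[OF abs_Re_le_cmod] order.trans[OF abs_Im_le_cmod])
  have "{\<omega>\<in>space M. (\<forall>k\<in>K. \<bar>\<epsilon> k \<omega>\<bar> \<le> \<tau>) \<and> 4 * \<rho> * D < cmod (\<Sum>k\<in>K. c k * \<epsilon> k \<omega>)} \<subseteq> F Re \<union> F Im"
  proof
    fix \<omega> assume \<omega>: "\<omega> \<in> {\<omega>\<in>space M. (\<forall>k\<in>K. \<bar>\<epsilon> k \<omega>\<bar> \<le> \<tau>) \<and> 4 * \<rho> * D < cmod (\<Sum>k\<in>K. c k * \<epsilon> k \<omega>)}"
    have "cmod (\<Sum>k\<in>K. c k * \<epsilon> k \<omega>) \<le> \<bar>\<Sum>k\<in>K. Re (c k) * \<epsilon> k \<omega>\<bar> + \<bar>\<Sum>k\<in>K. Im (c k) * \<epsilon> k \<omega>\<bar>"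
      using cmod_le[of "\<Sum>k\<in>K. c k * \<epsilon> k \<omega>"] by (simp add: Re_sum Im_sum)
    moreover have "4 * \<rho> * D < cmod (\<Sum>k\<in>K. c k * \<epsilon> k \<omega>)" using \<omega> by blast
    ultimately have "2 * \<rho> * D < \<bar>\<Sum>k\<in>K. Re (c k) * \<epsilon> k \<omega>\<bar> \<or> 2 * \<rho> * D < \<bar>\<Sum>k\<in>K. Im (c k) * \<epsilon> k \<omega>\<bar>"
      by linarith
    then show "\<omega> \<in> F Re \<union> F Im"
      using \<omega> unfolding F_def by auto
  qed
  then have "prob {\<omega>\<in>space M. (\<forall>k\<in>K. \<bar>\<epsilon> k \<omega>\<bar> \<le> \<tau>) \<and> 4 * \<rho> * D < cmod (\<Sum>k\<in>K. c k * \<epsilon> k \<omega>)}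
      \<le> prob (F Re) + prob (F Im)"
    by (intro order.trans[OF finite_measure_mono measure_Un_le]) (auto simp: F_def)
  then show ?thesis
    using F_le[of Re] F_le[of Im] by simp
qed

lemma prob_exists_weighted_sum_gt:
  fixes \<epsilon> :: "'k \<Rightarrow> 'a \<Rightarrow> real" and c :: "'i \<Rightarrow> 'k \<Rightarrow> complex" and \<rho> :: "'i \<Rightarrow> real"
  assumes K: "finite K" and I: "finite I" and ind: "indep_vars (\<lambda>_. borel) \<epsilon> K"
    and distr: "\<And>k. k \<in> K \<Longrightarrow> distr M borel (\<epsilon> k) = distr M borel e0"
    and c: "\<And>i k. i \<in> I \<Longrightarrow> k \<in> K \<Longrightarrow> cmod (c i k) \<le> \<rho> i" and \<rho>: "\<And>i. i \<in> I \<Longrightarrow> 0 < \<rho> i"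
    and \<tau>: "0 < \<tau>" and l: "0 < l" "2 * l * \<tau> \<le> 1"
    and D: "real (card K) * (expectation (\<lambda>\<omega>. \<bar>e0 \<omega>\<bar> powr \<kappa>) * \<tau> powr (1 - \<kappa>)) \<le> D"
  shows "prob {\<omega>\<in>space M. \<exists>i\<in>I. 4 * \<rho> i * D < cmod (\<Sum>k\<in>K. c i k * \<epsilon> k \<omega>)}
    \<le> real (card K) * (expectation (\<lambda>\<omega>. \<bar>e0 \<omega>\<bar> powr \<kappa>) / \<tau> powr \<kappa>)
      + 4 * real (card I) * exp (- l * D + real (card K) * l^2 * expectation (\<lambda>\<omega>. (e0 \<omega>)^2))"
proof -
  have [measurable]: "k \<in> K \<Longrightarrow> \<epsilon> k \<in> borel_measurable M" for k
    using ind unfolding indep_vars_def by auto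
  note K [simp] I [simp]
  define G where "G i = {\<omega>\<in>space M. (\<forall>k\<in>K. \<bar>\<epsilon> k \<omega>\<bar> \<le> \<tau>) \<and> 4 * \<rho> i * D < cmod (\<Sum>k\<in>K. c i k * \<epsilon> k \<omega>)}"
    for i
  have G_sets: "G i \<in> sets M" for i
    unfolding G_def by measurable
  then have [measurable]: "(\<Union>i\<in>I. G i) \<in> sets M"
    by (intro sets.finite_UN I)
  have "real (card K) * \<bar>expectation (\<lambda>\<omega>. truncate \<tau> (e0 \<omega>))\<bar> \<le> D"
    using abs_expectation_truncate_le[OF \<tau>] D by (meson mult_left_mono of_nat_0_le_iff order.trans)
  then have G_le: "prob (G i) \<le> 4 * exp (- l * D + real (card K) * l^2 * expectation (\<lambda>\<omega>. (e0 \<omega>)^2))"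
    if "i \<in> I" for i
    unfolding G_def using c that \<rho> by (intro prob_truncated_complex_weighted_sum_gt[OF K ind distr _ _ \<tau> l]) auto
  have "measure M (\<Union>i\<in>I. G i) \<le> (\<Sum>i\<in>I. prob (G i))"
    by (rule measure_UNION_le[OF I G_sets])
  also have "\<dots> \<le> (\<Sum>i\<in>I. 4 * exp (- l * D + real (card K) * l^2 * expectation (\<lambda>\<omega>. (e0 \<omega>)^2)))"
    by (rule sum_mono[OF G_le])
  finally have "measure M (\<Union>i\<in>I. G i)
      \<le> 4 * real (card I) * exp (- l * D + real (card K) * l^2 * expectation (\<lambda>\<omega>. (e0 \<omega>)^2))"
    by simp
  moreover have "{\<omega>\<in>space M. \<exists>i\<in>I. 4 * \<rho> i * D < cmod (\<Sum>k\<in>K. c i k * \<epsilon> k \<omega>)}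
      \<subseteq> {\<omega>\<in>space M. \<exists>k\<in>K. \<tau> < \<bar>\<epsilon> k \<omega>\<bar>} \<union> (\<Union>i\<in>I. G i)"
  proof
    fix \<omega> assume \<omega>: "\<omega> \<in> {\<omega>\<in>space M. \<exists>i\<in>I. 4 * \<rho> i * D < cmod (\<Sum>k\<in>K. c i k * \<epsilon> k \<omega>)}"
    show "\<omega> \<in> {\<omega>\<in>space M. \<exists>k\<in>K. \<tau> < \<bar>\<epsilon> k \<omega>\<bar>} \<union> (\<Union>i\<in>I. G i)"
    proof (cases "\<forall>k\<in>K. \<bar>\<epsilon> k \<omega>\<bar> \<le> \<tau>")
      case True
      with \<omega> show ?thesis unfolding G_def by blast
    next
      case False
      then obtain k where "k \<in> K" "\<tau> < \<bar>\<epsilon> k \<omega>\<bar>" by (auto simp: not_le)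
      with \<omega> show ?thesis by blast
    qed
  qed
  then have "prob {\<omega>\<in>space M. \<exists>i\<in>I. 4 * \<rho> i * D < cmod (\<Sum>k\<in>K. c i k * \<epsilon> k \<omega>)}
      \<le> prob {\<omega>\<in>space M. \<exists>k\<in>K. \<tau> < \<bar>\<epsilon> k \<omega>\<bar>} + measure M (\<Union>i\<in>I. G i)"
    by (intro order.trans[OF finite_measure_mono measure_Un_le]) measurable
  moreover have "prob {\<omega>\<in>space M. \<exists>k\<in>K. \<tau> < \<bar>\<epsilon> k \<omega>\<bar>}
      \<le> real (card K) * (expectation (\<lambda>\<omega>. \<bar>e0 \<omega>\<bar> powr \<kappa>) / \<tau> powr \<kappa>)"
    by (rule prob_exists_abs_gt[OF K _ distr \<tau>]) auto
  ultimately show ?thesis by linarith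
qed

text \<open>Truncation at \<open>\<tau> = n\<^sup>\<alpha>\<close>, Chernoff parameter \<open>\<lambda> = (ln n / n)\<^bsup>1/2\<^esup>\<close> and
  \<open>D = (E e0\<^sup>2 + 4) (n ln n)\<^bsup>1/2\<^esup>\<close>, so that the Chernoff bound is \<open>n\<^sup>-\<^sup>4\<close>. The first hypothesis on
  \<open>\<alpha>\<close> keeps the truncation bias below \<open>D\<close>, the second one is the range condition \<open>2 \<lambda> \<tau> \<le> 1\<close>.\<close>
lemma prob_exists_weighted_sum_gt_rate:
  fixes K :: "'k set" and \<epsilon> :: "'k \<Rightarrow> 'a \<Rightarrow> real" and c :: "'i \<Rightarrow> 'k \<Rightarrow> complex" and \<rho> :: "'i \<Rightarrow> real"
  defines "n \<equiv> real (card K)"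
  assumes K: "finite K" and I: "finite I" and ind: "indep_vars (\<lambda>_. borel) \<epsilon> K"
    and distr: "\<And>k. k \<in> K \<Longrightarrow> distr M borel (\<epsilon> k) = distr M borel e0"
    and c: "\<And>i k. i \<in> I \<Longrightarrow> k \<in> K \<Longrightarrow> cmod (c i k) \<le> \<rho> i / n" and \<rho>: "\<And>i. i \<in> I \<Longrightarrow> 0 < \<rho> i"
    and n: "3 \<le> n" and \<alpha>: "1 + \<alpha> * (1 - \<kappa>) \<le> 0" "2 * sqrt (ln n) * n powr (\<alpha> - 1/2) \<le> 1"
    and moment: "expectation (\<lambda>\<omega>. \<bar>e0 \<omega>\<bar> powr \<kappa>) \<le> (expectation (\<lambda>\<omega>. (e0 \<omega>)^2) + 4) * sqrt (n * ln n)"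
  shows "prob {\<omega>\<in>space M. \<exists>i\<in>I. 4 * \<rho> i * (expectation (\<lambda>\<omega>. (e0 \<omega>)^2) + 4) * sqrt (ln n / n)
      < cmod (\<Sum>k\<in>K. c i k * \<epsilon> k \<omega>)}
    \<le> expectation (\<lambda>\<omega>. \<bar>e0 \<omega>\<bar> powr \<kappa>) * n powr (1 - \<alpha> * \<kappa>) + 4 * real (card I) * n powr - 4"
proof -
  define s0 where "s0 = expectation (\<lambda>\<omega>. (e0 \<omega>)^2)"
  define Mk where "Mk = expectation (\<lambda>\<omega>. \<bar>e0 \<omega>\<bar> powr \<kappa>)"
  define \<tau> where "\<tau> = n powr \<alpha>"
  define l where "l = sqrt (ln n / n)"
  define D where "D = (s0 + 4) * sqrt (n * ln n)"
  have ln_n: "0 < ln n" using n by simp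
  have "l * \<tau> = sqrt (ln n) * n powr (\<alpha> - 1/2)"
    using n unfolding l_def \<tau>_def by (simp add: real_sqrt_divide powr_half_sqrt[symmetric] powr_diff)
  then have l\<tau>: "2 * l * \<tau> \<le> 1" using \<alpha>(2) by (simp add: mult.assoc)
  have lD: "l * D = (s0 + 4) * ln n"
    using n ln_n unfolding l_def D_def by (simp add: real_sqrt_mult[symmetric] power2_eq_square[symmetric])
  have "n * (Mk * \<tau> powr (1 - \<kappa>)) = Mk * n powr (1 + \<alpha> * (1 - \<kappa>))"
    using n unfolding \<tau>_def by (simp add: powr_powr powr_add)
  also have "\<dots> \<le> Mk * 1"
    using n \<alpha>(1) unfolding Mk_def
    by (intro mult_left_mono integral_nonneg_AE) (auto intro: order.trans[OF powr_mono[of _ 0]])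
  finally have D_ge: "n * (Mk * \<tau> powr (1 - \<kappa>)) \<le> D"
    using moment unfolding D_def Mk_def s0_def by simp
  have "prob {\<omega>\<in>space M. \<exists>i\<in>I. 4 * (\<rho> i / n) * D < cmod (\<Sum>k\<in>K. c i k * \<epsilon> k \<omega>)}
    \<le> n * (Mk / \<tau> powr \<kappa>) + 4 * real (card I) * exp (- l * D + n * l^2 * s0)"
    unfolding Mk_def s0_def n_def
    by (rule prob_exists_weighted_sum_gt[OF K I ind distr])
      (use c \<rho> n l\<tau> D_ge in \<open>auto simp: \<tau>_def l_def n_def Mk_def s0_def\<close>)
  moreover have "4 * (\<rho> i / n) * D = 4 * \<rho> i * (s0 + 4) * sqrt (ln n / n)" for i
  proof -
    have "ln n / n = (n * ln n) / n^2" using n by (simp add: power2_eq_square)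
    then have "sqrt (ln n / n) = sqrt (n * ln n) / n" using n by (simp add: real_sqrt_divide)
    then show ?thesis unfolding D_def by simp
  qed
  moreover have "n * (Mk / \<tau> powr \<kappa>) = Mk * n powr (1 - \<alpha> * \<kappa>)"
    using n unfolding \<tau>_def by (simp add: powr_powr powr_diff)
  moreover have "exp (- l * D + n * l^2 * s0) = n powr - 4"
  proof -
    have "- l * D + n * l^2 * s0 = - 4 * ln n"
      using n ln_n lD unfolding l_def by (simp add: algebra_simps)
    then show ?thesis using n by (simp add: powr_def)
  qed
  ultimately show ?thesis
    unfolding Mk_def s0_def by simp
qed

text \<open>With \<open>\<alpha> = (\<kappa>+3)/(4\<kappa>)\<close> the tails cost \<open>n\<^bsup>1-\<alpha>\<kappa>\<^esup> = n\<^bsup>-(\<kappa>-1)/4\<^esup>\<close>, which is summable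
  along \<open>n \<ge> C q\<^sup>2\<close> exactly when \<open>\<kappa> > 3\<close>; and \<open>\<alpha> < 1/2\<close>, so that \<open>\<lambda> \<tau> \<rightarrow> 0\<close>.\<close>
lemma eventually_weighted_sums_concentrate:
  assumes kappa: "3 < \<kappa>"
  shows "\<forall>\<^sub>F n in sequentially. \<forall>(K :: 'k set) (I :: 'i set) \<epsilon> c \<rho>.
    finite K \<and> card K = n \<and> finite I \<and> indep_vars (\<lambda>_. borel) \<epsilon> K
    \<and> (\<forall>k\<in>K. distr M borel (\<epsilon> k) = distr M borel e0)
    \<and> (\<forall>i\<in>I. 0 < \<rho> i \<and> (\<forall>k\<in>K. cmod (c i k) \<le> \<rho> i / real n)) \<longrightarrow>
    prob {\<omega>\<in>space M. \<exists>i\<in>I. 4 * \<rho> i * (expectation (\<lambda>\<omega>. (e0 \<omega>)^2) + 4) * sqrt (ln (real n) / real n)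
        < cmod (\<Sum>k\<in>K. c i k * \<epsilon> k \<omega>)}
      \<le> expectation (\<lambda>\<omega>. \<bar>e0 \<omega>\<bar> powr \<kappa>) * real n powr - ((\<kappa> - 1) / 4) + 4 * real (card I) * real n powr - 4"
proof -
  define \<alpha> where "\<alpha> = (\<kappa> + 3) / (4 * \<kappa>)"
  have exponents: "1 + \<alpha> * (1 - \<kappa>) \<le> 0" "1 - \<alpha> * \<kappa> = - ((\<kappa> - 1) / 4)" "\<alpha> - 1/2 < 0"
  proof -
    have "0 < (\<kappa> - 3) * (\<kappa> + 1)" using kappa by simp
    then show "1 + \<alpha> * (1 - \<kappa>) \<le> 0" using kappa unfolding \<alpha>_def by (simp add: field_simps)
  qed (use kappa in \<open>simp_all add: \<alpha>_def field_simps\<close>)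
  have "\<forall>\<^sub>F x in at_top. a \<le> b * sqrt (x * ln x)" if "0 < b" for a b :: real
    using that by real_asymp
  moreover have "0 < expectation (\<lambda>\<omega>. (e0 \<omega>)^2) + 4"
    by (simp add: add_nonneg_pos integral_nonneg_AE)
  moreover have "\<forall>\<^sub>F x in at_top. 2 * sqrt (ln x) * x powr (\<alpha> - 1/2) \<le> 1"
    using exponents(3) by real_asymp
  ultimately have "\<forall>\<^sub>F x in at_top. 3 \<le> x \<and> 2 * sqrt (ln x) * x powr (\<alpha> - 1/2) \<le> 1
      \<and> expectation (\<lambda>\<omega>. \<bar>e0 \<omega>\<bar> powr \<kappa>) \<le> (expectation (\<lambda>\<omega>. (e0 \<omega>)^2) + 4) * sqrt (x * ln x)"
    by (intro eventually_conj eventually_ge_at_top) auto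
  from eventually_compose_filterlim[OF this filterlim_real_sequentially] show ?thesis
    by (rule eventually_mono)
      (auto intro!: prob_exists_weighted_sum_gt_rate[where \<alpha>=\<alpha>, unfolded exponents(2)] exponents(1))
qed

end

section \<open>The noise part of the estimator\<close>

lemma finite_Kset [simp]: "finite (Kset P Q)"
  unfolding Kset_def by simp

lemma card_Kset [simp]: "card (Kset P Q) = P * Q"
  unfolding Kset_def by (simp add: card_cartesian_product)

definition noise_coeff :: "nat \<Rightarrow> nat \<Rightarrow> int \<Rightarrow> nat \<Rightarrow> nat \<times> nat \<Rightarrow> complex" where
  "noise_coeff P Q l m k = complex_of_real (cellw P Q (fst k)) * cnj (cpsi l m (z1 Q (fst k)) (z2 P (snd k)))"

definition noise_Rhat :: "nat \<Rightarrow> nat \<Rightarrow> int \<Rightarrow> nat \<Rightarrow> (nat \<times> nat \<Rightarrow> real) \<Rightarrow> complex" where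
  "noise_Rhat P Q l m e = (\<Sum>k\<in>Kset P Q. noise_coeff P Q l m k * complex_of_real (e k))"

definition noise_ghat :: "nat \<Rightarrow> nat \<Rightarrow> nat \<Rightarrow> (nat \<times> nat \<Rightarrow> real) \<Rightarrow> real \<Rightarrow> real \<Rightarrow> complex" where
  "noise_ghat P Q T e r \<theta> = (\<Sum>m=0..T. \<Sum>l\<in>{- int m..int m}.
      complex_of_real (sqrt (real m + 1)) * zphi l m r \<theta> * noise_Rhat P Q l m e)"

lemma Rhat_eq_signal_plus_noise: "Rhat g P Q e l m = Rhat g P Q (\<lambda>_. 0) l m + noise_Rhat P Q l m e"
  unfolding Rhat_def noise_Rhat_def noise_coeff_def
  by (simp add: sum.distrib[symmetric] distrib_left)

lemma ghat_eq_signal_plus_noise: "ghat g P Q T e r \<theta> = ghat g P Q T (\<lambda>_. 0) r \<theta> + noise_ghat P Q T e r \<theta>"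
  unfolding ghat_def noise_ghat_def
  by (subst Rhat_eq_signal_plus_noise) (simp add: sum.distrib[symmetric] distrib_left)

lemma ghat_minus_expectation:
  assumes "prob_space M"
    and "\<And>k. k \<in> Kset P Q \<Longrightarrow> integrable M (\<epsilon> k)"
    and "\<And>k. k \<in> Kset P Q \<Longrightarrow> integral\<^sup>L M (\<epsilon> k) = 0"
  shows "ghat g P Q T (\<lambda>k. \<epsilon> k \<omega>) r \<theta> - integral\<^sup>L M (\<lambda>\<omega>'. ghat g P Q T (\<lambda>k. \<epsilon> k \<omega>') r \<theta>)
     = noise_ghat P Q T (\<lambda>k. \<epsilon> k \<omega>) r \<theta>"
proof -
  interpret prob_space M by fact
  have int: "integrable M (\<lambda>\<omega>. noise_Rhat P Q l m (\<lambda>k. \<epsilon> k \<omega>))" for l m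
    unfolding noise_Rhat_def using assms(2) by (intro Bochner_Integration.integrable_sum integrable_mult_right) auto
  have "integral\<^sup>L M (\<lambda>\<omega>. noise_Rhat P Q l m (\<lambda>k. \<epsilon> k \<omega>)) = 0" for l m
    unfolding noise_Rhat_def using assms(2,3)
    by (subst Bochner_Integration.integral_sum) (auto intro!: integrable_mult_right)
  then have "integral\<^sup>L M (\<lambda>\<omega>. noise_ghat P Q T (\<lambda>k. \<epsilon> k \<omega>) r \<theta>) = 0"
    unfolding noise_ghat_def using int
    by (simp add: Bochner_Integration.integral_sum Bochner_Integration.integrable_sum integrable_mult_right)
  moreover have "integrable M (\<lambda>\<omega>. noise_ghat P Q T (\<lambda>k. \<epsilon> k \<omega>) r \<theta>)"
    unfolding noise_ghat_def using int by (intro Bochner_Integration.integrable_sum integrable_mult_right)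
  ultimately show ?thesis
    by (subst (1 2) ghat_eq_signal_plus_noise) (simp add: prob_space)
qed

lemma norm_zphi_le:
  assumes "0 \<le> r" "r \<le> 1"
  shows "cmod (zphi l m r \<theta>) \<le> sqrt (real m + 1)"
proof -
  have "\<bar>zernR m (nat \<bar>l\<bar>) r\<bar> \<le> 1" if "inN l m"
    using that assms unfolding inN_def by (intro abs_zernR_le_1) auto
  then show ?thesis
    unfolding zphi_def by (auto simp: norm_mult mult_left_le)
qed

lemma norm_cpsi_design_le:
  assumes "k1 < Q"
  shows "cmod (cpsi l m (z1 Q k1) \<phi>) \<le> real m + 1"
  using abs_chebU_le[of "z1 Q k1" m] z1_bounds[OF assms] unfolding cpsi_def by (auto simp: norm_mult)

lemma norm_noise_coeff_le:
  assumes "k \<in> Kset P Q" "0 < P"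
  shows "cmod (noise_coeff P Q l m k) \<le> 2 * (real m + 1) / real (P * Q)"
proof -
  have k1: "fst k < Q" using assms(1) unfolding Kset_def by auto
  have w: "0 \<le> cellw P Q (fst k)" "cellw P Q (fst k) \<le> 4 / (pi * real P * real Q)"
    using cellw_bounds[OF k1 assms(2)] by auto
  have "cmod (noise_coeff P Q l m k) \<le> 4 / (pi * real P * real Q) * (real m + 1)"
    unfolding noise_coeff_def norm_mult using w norm_cpsi_design_le[OF k1] by (intro mult_mono) auto
  also have "\<dots> \<le> 2 / (real P * real Q) * (real m + 1)"
    using pi_gt3 k1 assms(2) by (intro mult_right_mono) (auto simp: field_simps)
  finally show ?thesis by simp
qed

definition modes :: "nat \<Rightarrow> (nat \<times> int) set" where
  "modes T = (SIGMA m:{..T}. {- int m..int m})"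

lemma finite_modes [simp]: "finite (modes T)"
  unfolding modes_def by auto

lemma card_modes_le: "real (card (modes T)) \<le> 3 * (real T + 1)^2"
proof -
  have "card (modes T) = (\<Sum>m\<le>T. 2 * m + 1)"
    unfolding modes_def by (subst card_SigmaI) (auto simp: nat_add_distrib intro!: sum.cong)
  also have "real \<dots> \<le> (\<Sum>m\<le>T. 2 * real T + 1)"
    unfolding of_nat_sum by (intro sum_mono) auto
  also have "\<dots> \<le> 3 * (real T + 1)^2"
    by (simp add: power2_eq_square algebra_simps)
  finally show ?thesis by simp
qed

lemma norm_noise_ghat_le:
  assumes T: "1 \<le> T" and r: "0 \<le> r" "r \<le> 1"
    and X: "\<forall>(m, l) \<in> modes T. cmod (noise_Rhat P Q l m e) \<le> (real m + 1) * L"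
  shows "cmod (noise_ghat P Q T e r \<theta>) \<le> 24 * real T ^ 4 * L"
proof -
  have "(0, 0) \<in> modes T" unfolding modes_def by simp
  then have "cmod (noise_Rhat P Q 0 0 e) \<le> L" using X by fastforce
  then have L: "0 \<le> L" by (meson norm_ge_zero order.trans)
  have basis: "sqrt (real m + 1) * cmod (zphi l m r \<theta>) \<le> sqrt (real m + 1) * sqrt (real m + 1)" for l m
    using norm_zphi_le[OF r] by (intro mult_left_mono) auto
  have "cmod (noise_ghat P Q T e r \<theta>)
      \<le> (\<Sum>m=0..T. \<Sum>l\<in>{- int m..int m}. sqrt (real m + 1) * sqrt (real m + 1) * ((real m + 1) * L))"
    unfolding noise_ghat_def using X basis unfolding modes_def
    by (intro order.trans[OF norm_sum] sum_mono order.trans[OF norm_sum])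
      (auto simp: norm_mult simp del: real_sqrt_mult_self intro!: mult_mono)
  also have "\<dots> = (\<Sum>m=0..T. (2 * real m + 1) * (real m + 1)^2 * L)"
    by (simp add: power2_eq_square algebra_simps)
  also have "\<dots> \<le> (\<Sum>m=0..T. (2 * real T + 1) * (real T + 1)^2 * L)"
    using L by (intro sum_mono mult_right_mono mult_mono power_mono) auto
  also have "\<dots> = (real T + 1) * (2 * real T + 1) * (real T + 1)^2 * L"
    by simp
  also have "\<dots> \<le> (2 * real T) * (3 * real T) * (2 * real T)^2 * L"
    using T L by (intro mult_right_mono mult_mono power_mono) auto
  also have "\<dots> = 24 * real T ^ 4 * L"
    by (simp add: power2_eq_square power4_eq_xxxx)
  finally show ?thesis .
qed

definition sup_deviation ::
    "'a measure \<Rightarrow> (real \<times> real \<Rightarrow> real) \<Rightarrow> nat \<Rightarrow> nat \<Rightarrow> nat \<Rightarrow> (nat \<times> nat \<Rightarrow> 'a \<Rightarrow> real) \<Rightarrow> 'a \<Rightarrow> real"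
  where "sup_deviation M g P Q T \<epsilon> \<omega> = (SUP z\<in>{0..1} \<times> {0..2*pi}.
    cmod (ghat g P Q T (\<lambda>k. \<epsilon> k \<omega>) (fst z) (snd z) - integral\<^sup>L M (\<lambda>\<omega>'. ghat g P Q T (\<lambda>k. \<epsilon> k \<omega>') (fst z) (snd z))))"

lemma norm_sup_deviation_le:
  assumes "prob_space M"
    and centered: "\<And>k. k \<in> Kset P Q \<Longrightarrow> integrable M (\<epsilon> k) \<and> integral\<^sup>L M (\<epsilon> k) = 0"
    and T: "1 \<le> T"
    and X: "\<forall>(m, l) \<in> modes T. cmod (noise_Rhat P Q l m (\<lambda>k. \<epsilon> k \<omega>)) \<le> (real m + 1) * L"
  shows "norm (sup_deviation M g P Q T \<epsilon> \<omega>) \<le> 24 * real T ^ 4 * L"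
proof -
  define dev where "dev z = cmod (ghat g P Q T (\<lambda>k. \<epsilon> k \<omega>) (fst z) (snd z)
      - integral\<^sup>L M (\<lambda>\<omega>'. ghat g P Q T (\<lambda>k. \<epsilon> k \<omega>') (fst z) (snd z)))" for z
  have dev_le: "dev z \<le> 24 * real T ^ 4 * L" if "z \<in> {0..1} \<times> {0..2*pi}" for z
  proof -
    have "dev z = cmod (noise_ghat P Q T (\<lambda>k. \<epsilon> k \<omega>) (fst z) (snd z))"
      unfolding dev_def using ghat_minus_expectation[OF assms(1)] centered by simp
    also have "\<dots> \<le> 24 * real T ^ 4 * L"
      using that by (intro norm_noise_ghat_le T X) auto
    finally show ?thesis .
  qed
  have "bdd_above (dev ` ({0..1} \<times> {0..2*pi}))"
    using dev_le by (intro bdd_aboveI2) auto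
  then have "dev (0, 0) \<le> (SUP z\<in>{0..1} \<times> {0..2*pi}. dev z)"
    by (rule cSUP_upper[rotated]) auto
  then have "0 \<le> (SUP z\<in>{0..1} \<times> {0..2*pi}. dev z)"
    unfolding dev_def by (meson norm_ge_zero order.trans)
  then show ?thesis
    using dev_le unfolding sup_deviation_def dev_def[symmetric] by (auto intro!: cSUP_least)
qed

section \<open>Almost sure rate\<close>

lemma card_modes_powr_le:
  assumes n: "1 \<le> n" and T: "real T \<le> Ct * sqrt n" and Ct: "0 \<le> Ct"
  shows "4 * real (card (modes T)) * n powr - 4 \<le> 12 * (Ct + 1)^2 * n powr - 3"
proof -
  have "1 \<le> sqrt n" using n by simp
  then have "real T + 1 \<le> Ct * sqrt n + sqrt n" using T by linarith
  then have "real T + 1 \<le> (Ct + 1) * sqrt n" by (simp add: algebra_simps)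
  then have "real (card (modes T)) \<le> 3 * ((Ct + 1) * sqrt n)^2"
    by (intro order.trans[OF card_modes_le] mult_left_mono power_mono) auto
  also have "\<dots> = 3 * (Ct + 1)^2 * n"
    using n by (simp add: power_mult_distrib)
  finally have "4 * real (card (modes T)) * n powr - 4 \<le> 4 * (3 * (Ct + 1)^2 * n) * n powr - 4"
    by (intro mult_right_mono mult_left_mono) auto
  also have "\<dots> = 12 * (Ct + 1)^2 * n powr - 3"
    using n by (simp add: powr_mult_base)
  finally show ?thesis .
qed

lemma summable_powr_of_quadratic_growth:
  fixes x :: "nat \<Rightarrow> real"
  assumes C: "0 < C" and x: "\<And>q. 1 \<le> q \<Longrightarrow> C * real q ^ 2 \<le> x q" and \<gamma>: "1/2 < \<gamma>"
  shows "summable (\<lambda>q. x q powr - \<gamma>)"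
proof (rule summable_comparison_test_ev)
  show "summable (\<lambda>q. C powr - \<gamma> * real q powr (- 2 * \<gamma>))"
    using \<gamma> by (intro summable_mult) (simp add: summable_real_powr_iff)
  have "norm (x q powr - \<gamma>) \<le> C powr - \<gamma> * real q powr (- 2 * \<gamma>)" if "1 \<le> q" for q
  proof -
    have "x q powr - \<gamma> \<le> (C * real q ^ 2) powr - \<gamma>"
      using x[OF that] C \<gamma> that by (intro powr_mono2') auto
    also have "\<dots> = C powr - \<gamma> * real q powr (- 2 * \<gamma>)"
      using C by (simp add: powr_mult powr_powr flip: powr_numeral)
    finally show ?thesis by simp
  qed
  then show "\<forall>\<^sub>F q in sequentially. norm (x q powr - \<gamma>) \<le> C powr - \<gamma> * real q powr (- 2 * \<gamma>)"
    using eventually_ge_at_top[of "1::nat"] by (rule eventually_mono[rotated]) auto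
qed

lemma design_p_ge_1:
  assumes C: "0 < C" and p: "C * real q \<le> real (p q)" and q: "1 \<le> q"
  shows "1 \<le> p q"
proof -
  have "0 < C * real q" using C q by simp
  then show ?thesis using p by linarith
qed

lemma design_size_quadratic:
  assumes "C * real q \<le> real (p q)"
  shows "C * real q ^ 2 \<le> real (p q * q)"
  using mult_right_mono[OF assms, of "real q"] by (simp add: power2_eq_square ac_simps)

lemma design_size_tendsto:
  assumes C: "0 < C" and p: "\<And>q. 1 \<le> q \<Longrightarrow> C * real q \<le> real (p q)"
  shows "filterlim (\<lambda>q. p q * q) at_top sequentially"
proof (rule filterlim_at_top_mono[OF filterlim_ident])
  show "\<forall>\<^sub>F q in sequentially. q \<le> p q * q"
    using eventually_ge_at_top[of "1::nat"]
  proof eventually_elim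
    case (elim q)
    then show ?case using design_p_ge_1[of C q p] C p by simp
  qed
qed

context noise_law
begin

lemma centered_of_distr_eq:
  assumes "X \<in> borel_measurable M" "distr M borel X = distr M borel e0"
  shows "integrable M X" "expectation X = 0"
  using integrable_iff_of_distr_eq[OF assms(1) e0_measurable _ assms(2), of "\<lambda>y. y"]
    expectation_eq_of_distr_eq[OF assms(1) e0_measurable _ assms(2), of "\<lambda>y. y"]
    integrable_e0 e0_mean
  by simp_all

lemma eventually_prob_noise_Rhat_large_le:
  fixes p T :: "nat \<Rightarrow> nat" and eps :: "nat \<Rightarrow> nat \<times> nat \<Rightarrow> 'a \<Rightarrow> real"
  assumes kappa: "3 < \<kappa>" and C: "0 < C" and p: "\<And>q. 1 \<le> q \<Longrightarrow> C * real q \<le> real (p q)"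
    and ind: "\<And>q. indep_vars (\<lambda>_. borel) (eps q) (Kset (p q) q)"
    and distr: "\<And>q k. k \<in> Kset (p q) q \<Longrightarrow> distr M borel (eps q k) = distr M borel e0"
    and Ct: "0 \<le> Ct" and T: "\<forall>\<^sub>F q in sequentially. real (T q) \<le> Ct * sqrt (real (p q * q))"
  defines "K0 \<equiv> 8 * (expectation (\<lambda>\<omega>. (e0 \<omega>)^2) + 4)"
  shows "\<forall>\<^sub>F q in sequentially. prob {\<omega>\<in>space M. \<exists>(m, l)\<in>modes (T q).
      (real m + 1) * (K0 * sqrt (ln (real (p q * q)) / real (p q * q))) < cmod (noise_Rhat (p q) q l m (\<lambda>k. eps q k \<omega>))}
    \<le> expectation (\<lambda>\<omega>. \<bar>e0 \<omega>\<bar> powr \<kappa>) * real (p q * q) powr - ((\<kappa> - 1) / 4)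
      + 12 * (Ct + 1)^2 * real (p q * q) powr - 3"
proof -
  have "filterlim (\<lambda>q. p q * q) at_top sequentially"
    using C p by (rule design_size_tendsto)
  note concentration = eventually_compose_filterlim[OF
      eventually_weighted_sums_concentrate[where 'k="nat \<times> nat" and 'i="nat \<times> int", OF kappa] this]
  have "\<forall>\<^sub>F q in sequentially. 1 \<le> q \<and> 1 \<le> p q"
    using eventually_ge_at_top[of "1::nat"] by eventually_elim (use design_p_ge_1 C p in blast)
  with concentration T show ?thesis
  proof eventually_elim
    case (elim q)
    define n where "n = real (p q * q)"
    have "1 * 1 \<le> real (p q) * real q" using elim(3) by (intro mult_mono) auto
    then have n: "1 \<le> n" unfolding n_def by simp
    have threshold: "(real m + 1) * (K0 * sqrt (ln n / n))
        = 4 * (2 * (real m + 1)) * (expectation (\<lambda>\<omega>. (e0 \<omega>)^2) + 4) * sqrt (ln n / n)" for m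
      unfolding K0_def by (simp add: algebra_simps)
    have "finite (Kset (p q) q) \<and> card (Kset (p q) q) = p q * q \<and> finite (modes (T q))
      \<and> indep_vars (\<lambda>_. borel) (eps q) (Kset (p q) q) \<and> (\<forall>k\<in>Kset (p q) q. distr M borel (eps q k) = distr M borel e0)
      \<and> (\<forall>i\<in>modes (T q). 0 < 2 * (real (fst i) + 1) \<and> (\<forall>k\<in>Kset (p q) q.
          cmod (noise_coeff (p q) q (snd i) (fst i) k) \<le> 2 * (real (fst i) + 1) / real (p q * q)))"
      using ind distr norm_noise_coeff_le elim(3) by simp
    note weighted_sums = elim(1)[rule_format, OF this]
    have "prob {\<omega>\<in>space M. \<exists>(m, l)\<in>modes (T q).
        (real m + 1) * (K0 * sqrt (ln n / n)) < cmod (noise_Rhat (p q) q l m (\<lambda>k. eps q k \<omega>))}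
      \<le> expectation (\<lambda>\<omega>. \<bar>e0 \<omega>\<bar> powr \<kappa>) * n powr - ((\<kappa> - 1) / 4) + 4 * real (card (modes (T q))) * n powr - 4"
      using weighted_sums unfolding noise_Rhat_def threshold by (simp add: case_prod_beta n_def)
    moreover have "4 * real (card (modes (T q))) * n powr - 4 \<le> 12 * (Ct + 1)^2 * n powr - 3"
      using n elim(2) Ct unfolding n_def[symmetric] by (rule card_modes_powr_le)
    ultimately show ?case unfolding n_def by linarith
  qed
qed

lemma AE_eventually_noise_Rhat_le:
  fixes p t :: "nat \<Rightarrow> nat" and eps :: "nat \<Rightarrow> nat \<times> nat \<Rightarrow> 'a \<Rightarrow> real"
  assumes kappa: "3 < \<kappa>" and C: "0 < C" and p: "\<And>q. 1 \<le> q \<Longrightarrow> C * real q \<le> real (p q)"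
    and ind: "\<And>q. indep_vars (\<lambda>_. borel) (eps q) (Kset (p q) q)"
    and distr: "\<And>q k. k \<in> Kset (p q) q \<Longrightarrow> distr M borel (eps q k) = distr M borel e0"
    and t: "(\<lambda>n. real (t n) / sqrt (real n)) \<in> O(\<lambda>_. 1)"
  defines "K0 \<equiv> 8 * (expectation (\<lambda>\<omega>. (e0 \<omega>)^2) + 4)"
  shows "AE \<omega> in M. \<forall>\<^sub>F q in sequentially. \<forall>(m, l) \<in> modes (t (p q * q)).
    cmod (noise_Rhat (p q) q l m (\<lambda>k. eps q k \<omega>))
      \<le> (real m + 1) * (K0 * sqrt (ln (real (p q * q)) / real (p q * q)))"
proof -
  define bad where "bad q = {\<omega>\<in>space M. \<exists>(m, l)\<in>modes (t (p q * q)).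
    (real m + 1) * (K0 * sqrt (ln (real (p q * q)) / real (p q * q))) < cmod (noise_Rhat (p q) q l m (\<lambda>k. eps q k \<omega>))}"
    for q
  obtain Ct where Ct: "0 < Ct" "\<forall>\<^sub>F n in sequentially. real (t n) / sqrt (real n) \<le> Ct"
    using t by (auto elim!: landau_o.bigE)
  have "\<forall>\<^sub>F q in sequentially. real (t (p q * q)) \<le> Ct * sqrt (real (p q * q))"
  proof -
    have "\<forall>\<^sub>F n in sequentially. real (t n) \<le> Ct * sqrt (real n)"
      using Ct(2) eventually_gt_at_top[of "0::nat"] by eventually_elim (simp add: field_simps)
    then show ?thesis
      by (rule eventually_compose_filterlim) (use C p in \<open>rule design_size_tendsto\<close>)
  qed
  then have bound: "\<forall>\<^sub>F q in sequentially. norm (prob (bad q))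
    \<le> expectation (\<lambda>\<omega>. \<bar>e0 \<omega>\<bar> powr \<kappa>) * real (p q * q) powr - ((\<kappa> - 1) / 4)
      + 12 * (Ct + 1)^2 * real (p q * q) powr - 3"
    using eventually_prob_noise_Rhat_large_le[OF kappa C p ind distr, of Ct] Ct(1)
    unfolding bad_def K0_def by simp
  have "\<And>q. 1 \<le> q \<Longrightarrow> C * real q ^ 2 \<le> real (p q * q)"
    using design_size_quadratic p by blast
  then have "summable (\<lambda>q. real (p q * q) powr - ((\<kappa> - 1) / 4))" "summable (\<lambda>q. real (p q * q) powr - 3)"
    using kappa by (intro summable_powr_of_quadratic_growth[OF C]; simp)+
  then have "summable (\<lambda>q. prob (bad q))"
    by (intro summable_comparison_test_ev[OF bound] summable_add summable_mult)
  moreover have "bad q \<in> sets M" for q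
  proof -
    have [measurable]: "k \<in> Kset (p q) q \<Longrightarrow> eps q k \<in> borel_measurable M" for k
      using ind unfolding indep_vars_def by auto
    show ?thesis unfolding bad_def noise_Rhat_def by measurable
  qed
  ultimately have "AE \<omega> in M. \<forall>\<^sub>F q in sequentially. \<omega> \<in> space M - bad q"
    by (intro borel_cantelli_AE1) (auto simp: emeasure_eq_measure)
  then show ?thesis
    by (elim eventually_mono) (simp add: bad_def not_less case_prod_beta)
qed

end

lemma sup_deviation_bigo:
  fixes p t :: "nat \<Rightarrow> nat"
  assumes "prob_space M"
    and t: "\<forall>n. 1 \<le> t n" and K0: "0 < K0"
    and centered: "\<And>q k. k \<in> Kset (p q) q \<Longrightarrow> integrable M (eps q k) \<and> integral\<^sup>L M (eps q k) = 0"
    and small: "\<forall>\<^sub>F q in sequentially. \<forall>(m, l) \<in> modes (t (p q * q)).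
      cmod (noise_Rhat (p q) q l m (\<lambda>k. eps q k \<omega>))
        \<le> (real m + 1) * (K0 * sqrt (ln (real (p q * q)) / real (p q * q)))"
  shows "(\<lambda>q. sup_deviation M g (p q) q (t (p q * q)) (eps q) \<omega>)
    \<in> O(\<lambda>q. real (t (p q * q)) ^ 4 * sqrt (ln (real (p q * q))) / sqrt (real (p q * q)))"
proof (rule landau_o.bigI[of "24 * K0"])
  show "0 < 24 * K0" using K0 by simp
  show "\<forall>\<^sub>F q in sequentially. norm (sup_deviation M g (p q) q (t (p q * q)) (eps q) \<omega>)
      \<le> 24 * K0 * norm (real (t (p q * q)) ^ 4 * sqrt (ln (real (p q * q))) / sqrt (real (p q * q)))"
    using small
  proof (rule eventually_mono)
    fix q assume "\<forall>(m, l) \<in> modes (t (p q * q)). cmod (noise_Rhat (p q) q l m (\<lambda>k. eps q k \<omega>))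
      \<le> (real m + 1) * (K0 * sqrt (ln (real (p q * q)) / real (p q * q)))"
    then have "norm (sup_deviation M g (p q) q (t (p q * q)) (eps q) \<omega>)
      \<le> 24 * real (t (p q * q)) ^ 4 * (K0 * sqrt (ln (real (p q * q)) / real (p q * q)))"
      using assms(1) t centered by (intro norm_sup_deviation_le) auto
    also have "\<dots> = 24 * K0 * (real (t (p q * q)) ^ 4 * sqrt (ln (real (p q * q))) / sqrt (real (p q * q)))"
      by (simp add: real_sqrt_divide)
    also have "\<dots> \<le> 24 * K0 * norm (real (t (p q * q)) ^ 4 * sqrt (ln (real (p q * q))) / sqrt (real (p q * q)))"
      unfolding real_norm_def using K0 by (intro mult_left_mono abs_ge_self) simp
    finally show "norm (sup_deviation M g (p q) q (t (p q * q)) (eps q) \<omega>)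
      \<le> 24 * K0 * norm (real (t (p q * q)) ^ 4 * sqrt (ln (real (p q * q))) / sqrt (real (p q * q)))" .
  qed
qed

theorem lemma3p2:
  fixes M :: "'a measure" and p :: "nat \<Rightarrow> nat" and t :: "nat \<Rightarrow> nat"
    and g :: "real \<times> real \<Rightarrow> real"
    and eps :: "nat \<Rightarrow> nat \<times> nat \<Rightarrow> 'a \<Rightarrow> real" and e0 :: "'a \<Rightarrow> real"
    and C1 C2 \<kappa> :: real
  assumes "prob_space M"
    and "C1 > 0" and "C2 > 0"
    and "\<forall>q\<ge>1. C1 * real q \<le> real (p q) \<and> real (p q) \<le> C2 * real q"
    and "e0 \<in> borel_measurable M"
    and "integral\<^sup>L M e0 = 0"
    and "\<kappa> > 3" and "integrable M (\<lambda>\<omega>. \<bar>e0 \<omega>\<bar> powr \<kappa>)"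
    and "\<forall>q. prob_space.indep_vars M (\<lambda>_. borel) (eps q) (Kset (p q) q)"
    and "\<forall>q. \<forall>k\<in>Kset (p q) q. distr M borel (eps q k) = distr M borel e0"
    and "(\<lambda>n. real (t n) / sqrt (real n)) \<in> O(\<lambda>_. 1)"
    and "\<forall>n. 1 \<le> t n"
  shows "AE \<omega> in M.
    (\<lambda>q. SUP z\<in>{0..1} \<times> {0..2*pi}.
        cmod (ghat g (p q) q (t (p q * q)) (\<lambda>k. eps q k \<omega>) (fst z) (snd z)
          - integral\<^sup>L M (\<lambda>\<omega>'. ghat g (p q) q (t (p q * q)) (\<lambda>k. eps q k \<omega>') (fst z) (snd z))))
    \<in> O(\<lambda>q. real (t (p q * q)) ^ 4 * sqrt (ln (real (p q * q))) / sqrt (real (p q * q)))"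
proof -
  \<comment> \<open>Only the lower bound on \<open>p q\<close> matters: it makes \<open>n = p q * q\<close> grow quadratically in \<open>q\<close>.\<close>
  interpret noise_law M e0 \<kappa>
    using assms(1,5-8) by (intro noise_law.intro noise_law_axioms.intro) auto
  define K0 where "K0 = 8 * (expectation (\<lambda>\<omega>. (e0 \<omega>)^2) + 4)"
  have "0 < K0" unfolding K0_def by (simp add: add_nonneg_pos integral_nonneg_AE)
  have centered: "integrable M (eps q k) \<and> expectation (eps q k) = 0" if "k \<in> Kset (p q) q" for q k
    using assms(9,10) that centered_of_distr_eq[of "eps q k"] unfolding indep_vars_def by auto
  have "AE \<omega> in M. \<forall>\<^sub>F q in sequentially. \<forall>(m, l) \<in> modes (t (p q * q)).
      cmod (noise_Rhat (p q) q l m (\<lambda>k. eps q k \<omega>))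
        \<le> (real m + 1) * (K0 * sqrt (ln (real (p q * q)) / real (p q * q)))"
    unfolding K0_def using assms(2,4,7,9-11) by (intro AE_eventually_noise_Rhat_le) auto
  then show ?thesis
    unfolding sup_deviation_def[symmetric]
    using assms(1,12) centered \<open>0 < K0\<close> by (elim eventually_mono) (rule sup_deviation_bigo)
qed

end
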